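(* Let $g\ge1$ and $n\ge3$. Let $H$ be a group and $\lambda:B_n(\Sigma_g)\to H$ a surjective homomorphism such that $\lambda(\iota_n(B_n))$ is isomorphic to $\mathbb{Z}$. Then there is an isomorphism $\iota:H\to B_n(\Sigma_g)/\Gamma_3(B_n(\Sigma_g))$ such that $\iota\circ\lambda$ sends each generator $\sigma_1,\dots,\sigma_{n-1},a_1,b_1,\dots,a_g,b_g$ of $B_n(\Sigma_g)$ to its class in $B_n(\Sigma_g)/\Gamma_3(B_n(\Sigma_g))$.
   Context: $\Sigma_g$: compact connected orientable surface of genus $g\ge1$ with one boundary component; $B_n(\Sigma_g)=\pi_1(F_n(\Sigma_g)/S_n)$; $\Gamma_1(G)=G$, $\Gamma_i(G)=[G,\Gamma_{i-1}(G)]$. $\iota_n:B_n\to B_n(\Sigma_g)$ is the (injective) homomorphism induced by an embedding of a disc in $\Sigma_g$; its image is the subgroup generated by $\sigma_1,\dots,\sigma_{n-1}$. $B_n(\Sigma_g)$ has the presentation with generators $\sigma_1,\dots,\sigma_{n-1},a_1,b_1,\dots,a_g,b_g$ and relations: $\sigma_i\sigma_j=\sigma_j\sigma_i$ for $|i-j|\ge2$; $\sigma_i\sigma_{i+1}\sigma_i=\sigma_{i+1}\sigma_i\sigma_{i+1}$ for $1\le i\le n-2$; $c\sigma_j=\sigma_jc$ for $c\in\{a_i,b_i\}$, $j\ge2$; $c\sigma_1c\sigma_1=\sigma_1c\sigma_1c$ for $c\in\{a_i,b_i\}$; $a_i\sigma_1b_i=\sigma_1b_i\sigma_1a_i\sigma_1$;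 $c_i(\sigma_1^{-1}c_j\sigma_1)=(\sigma_1^{-1}c_j\sigma_1)c_i$ for $c_i\in\{a_i,b_i\}$, $c_j\in\{a_j,b_j\}$, $1\le j<i\le g$. *)

theory Defs
  imports "HOL-Algebra.Algebra"
begin

text \<open>A letter is a generator together with a flag; (x, False) stands for x, (x, True) for x^-1.
  Words are lists of letters.\<close>

type_synonym 'a word = "('a \<times> bool) list"

definition inv_letter :: "'a \<times> bool \<Rightarrow> 'a \<times> bool" where
  "inv_letter l = (fst l, \<not> snd l)"

definition word_inv :: "'a word \<Rightarrow> 'a word" where
  "word_inv w = rev (map inv_letter w)"

definition gen_word :: "'a \<Rightarrow> 'a word" where
  "gen_word x = [(x, False)]"

inductive_set pres_rel :: "'a set \<Rightarrow> 'a word set \<Rightarrow> ('a word \<times> 'a word) set"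
  for S :: "'a set" and R :: "'a word set" where
  refl: "set w \<subseteq> S \<times> UNIV \<Longrightarrow> (w, w) \<in> pres_rel S R"
| sym: "(u, v) \<in> pres_rel S R \<Longrightarrow> (v, u) \<in> pres_rel S R"
| trans: "(u, v) \<in> pres_rel S R \<Longrightarrow> (v, w) \<in> pres_rel S R \<Longrightarrow> (u, w) \<in> pres_rel S R"
| relator: "set u \<subseteq> S \<times> UNIV \<Longrightarrow> set v \<subseteq> S \<times> UNIV \<Longrightarrow> r \<in> R \<Longrightarrow> set r \<subseteq> S \<times> UNIV
     \<Longrightarrow> (u @ v, u @ r @ v) \<in> pres_rel S R"
| cancel: "set u \<subseteq> S \<times> UNIV \<Longrightarrow> set v \<subseteq> S \<times> UNIV \<Longrightarrow> fst l \<in> S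
     \<Longrightarrow> (u @ v, u @ [l, inv_letter l] @ v) \<in> pres_rel S R"

definition presented_group :: "'a set \<Rightarrow> 'a word set \<Rightarrow> ('a word set) monoid" where
  "presented_group S R =
     \<lparr>carrier = {pres_rel S R `` {w} | w. set w \<subseteq> S \<times> UNIV},
      monoid.mult = (\<lambda>U V. {z. \<exists>x\<in>U. \<exists>y\<in>V. (x @ y, z) \<in> pres_rel S R}),
      one = pres_rel S R `` {[]}\<rparr>"

definition word_class :: "'a set \<Rightarrow> 'a word set \<Rightarrow> 'a word \<Rightarrow> 'a word set" where
  "word_class S R w = pres_rel S R `` {w}"

datatype bgen = Sig nat | Ag nat | Bg nat

definition braid_gens :: "nat \<Rightarrow> nat \<Rightarrow> bgen set" where
  "braid_gens n g = {Sig i | i. 1 \<le> i \<and> i \<le> n - 1} \<union> {Ag i | i. 1 \<le> i \<and> i \<le> g}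
                    \<union> {Bg i | i. 1 \<le> i \<and> i \<le> g}"

text \<open>A relation u = v is encoded as the relator u v^-1.\<close>

definition rel_word :: "bgen word \<Rightarrow> bgen word \<Rightarrow> bgen word" where
  "rel_word u v = u @ word_inv v"

definition braid_relators :: "nat \<Rightarrow> nat \<Rightarrow> bgen word set" where
  "braid_relators n g =
     {rel_word (gen_word (Sig i) @ gen_word (Sig j)) (gen_word (Sig j) @ gen_word (Sig i)) | i j.
        1 \<le> i \<and> i \<le> n - 1 \<and> 1 \<le> j \<and> j \<le> n - 1 \<and> (i + 2 \<le> j \<or> j + 2 \<le> i)}
   \<union> {rel_word (gen_word (Sig i) @ gen_word (Sig (i+1)) @ gen_word (Sig i))
               (gen_word (Sig (i+1)) @ gen_word (Sig i) @ gen_word (Sig (i+1))) | i.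
        1 \<le> i \<and> i \<le> n - 2}
   \<union> {rel_word (gen_word c @ gen_word (Sig j)) (gen_word (Sig j) @ gen_word c) | c j.
        c \<in> {Ag i | i. 1 \<le> i \<and> i \<le> g} \<union> {Bg i | i. 1 \<le> i \<and> i \<le> g} \<and> 2 \<le> j \<and> j \<le> n - 1}
   \<union> {rel_word (gen_word c @ gen_word (Sig 1) @ gen_word c @ gen_word (Sig 1))
               (gen_word (Sig 1) @ gen_word c @ gen_word (Sig 1) @ gen_word c) | c.
        c \<in> {Ag i | i. 1 \<le> i \<and> i \<le> g} \<union> {Bg i | i. 1 \<le> i \<and> i \<le> g}}
   \<union> {rel_word (gen_word (Ag i) @ gen_word (Sig 1) @ gen_word (Bg i))
               (gen_word (Sig 1) @ gen_word (Bg i) @ gen_word (Sig 1) @ gen_word (Ag i) @ gen_word (Sig 1)) | i.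
        1 \<le> i \<and> i \<le> g}
   \<union> {rel_word (gen_word ci @ word_inv (gen_word (Sig 1)) @ gen_word cj @ gen_word (Sig 1))
               (word_inv (gen_word (Sig 1)) @ gen_word cj @ gen_word (Sig 1) @ gen_word ci) | ci cj i j.
        1 \<le> j \<and> j < i \<and> i \<le> g \<and> ci \<in> {Ag i, Bg i} \<and> cj \<in> {Ag j, Bg j}}"

definition braid_group :: "nat \<Rightarrow> nat \<Rightarrow> (bgen word set) monoid" where
  "braid_group n g = presented_group (braid_gens n g) (braid_relators n g)"

definition bgen_elem :: "nat \<Rightarrow> nat \<Rightarrow> bgen \<Rightarrow> bgen word set" where
  "bgen_elem n g x = word_class (braid_gens n g) (braid_relators n g) (gen_word x)"

text \<open>The image of iota_n : B_n \<rightarrow> B_n(Sigma_g): the subgroup generated by sigma_1, ..., sigma_{n-1}.\<close>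

definition iota_image :: "nat \<Rightarrow> nat \<Rightarrow> bgen word set set" where
  "iota_image n g = generate (braid_group n g) {bgen_elem n g (Sig i) | i. 1 \<le> i \<and> i \<le> n - 1}"

definition comm_subgroup :: "('a, 'b) monoid_scheme \<Rightarrow> 'a set \<Rightarrow> 'a set \<Rightarrow> 'a set" where
  "comm_subgroup G A B = generate G
     {x \<otimes>\<^bsub>G\<^esub> y \<otimes>\<^bsub>G\<^esub> inv\<^bsub>G\<^esub> x \<otimes>\<^bsub>G\<^esub> inv\<^bsub>G\<^esub> y | x y. x \<in> A \<and> y \<in> B}"

text \<open>Gamma_1(G) = G, Gamma_i(G) = [G, Gamma_{i-1}(G)]; Gamma 0 is set to G by convention.\<close>

fun lower_central :: "('a, 'b) monoid_scheme \<Rightarrow> nat \<Rightarrow> 'a set" where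
  "lower_central G 0 = carrier G"
| "lower_central G (Suc 0) = carrier G"
| "lower_central G (Suc (Suc k)) = comm_subgroup G (carrier G) (lower_central G (Suc k))"

end

theory Submission
  imports Defs
begin

text \<open>
  We prove \<open>ker \<lambda> = \<Gamma>\<^sub>3\<close>; the first isomorphism theorem then yields the isomorphism
  \<open>H \<cong> B\<^sub>n(\<Sigma>\<^sub>g)/\<Gamma>\<^sub>3\<close> sending \<open>\<lambda>(x)\<close> to the coset of \<open>x\<close>.

  The development proceeds as follows.
  (1) Generic facts on groups given by generators and relators (the group structure, generation
      by the generators, the universal property) and on groups in general (twisted commutation
      \<open>a b = z b a\<close>, the first isomorphism theorem, subgroups isomorphic to \<open>\<int>\<close>).
  (2) The defining relations of \<open>B\<^sub>n(\<Sigma>\<^sub>g)\<close> as equations between elements, and the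
      exponent-sum homomorphisms \<open>\<alpha>\<^sub>i, \<beta>\<^sub>i : B\<^sub>n(\<Sigma>\<^sub>g) \<rightarrow> \<int>\<close> counting \<open>a\<^sub>i\<close> resp. \<open>b\<^sub>i\<close>
      (\<open>gen_count\<close> below).
  (3) In any quotient in which the commutator \<open>[\<sigma>\<^sub>m\<^sub>+\<^sub>1, \<sigma>\<^sub>m]\<close> commutes with \<open>\<sigma>\<^sub>m\<close>, the braid
      relation forces all \<open>\<sigma>\<^sub>i\<close> to become equal.  This applies both to \<open>H\<close> (the images
      of the \<open>\<sigma>\<^sub>i\<close> lie in a copy of \<open>\<int>\<close>) and to \<open>B\<^sub>n(\<Sigma>\<^sub>g)/\<Gamma>\<^sub>3\<close>.
  (4) For any homomorphism \<open>f\<close> sending every \<open>\<sigma>\<^sub>i\<close> to one element \<open>s\<close>: \<open>s\<close> is central in the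
      image, \<open>f(a\<^sub>i) f(b\<^sub>i) = s\<^sup>2 f(b\<^sub>i) f(a\<^sub>i)\<close>, and in general \<open>f(x) f(y) = s\<^sup>k f(y) f(x)\<close> with
      \<open>k\<close> given by \<open>\<alpha>\<^sub>i, \<beta>\<^sub>i\<close>.  Hence \<open>\<Gamma>\<^sub>3 \<subseteq> ker f\<close>, and elements with vanishing exponent
      sums are mapped into \<open>\<langle>s\<rangle>\<close>.
  (5) For \<open>\<lambda>\<close> the element \<open>s\<close> has infinite order, so kernel elements have vanishing exponent
      sums.  Applying (4) to the projection onto \<open>B\<^sub>n(\<Sigma>\<^sub>g)/\<Gamma>\<^sub>3\<close> places each kernel element in
      \<open>\<sigma>\<^sub>1\<^sup>k \<Gamma>\<^sub>3\<close>, and applying \<open>\<lambda>\<close> gives \<open>k = 0\<close>.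
\<close>

section \<open>Groups given by generators and relators\<close>

lemma pres_rel_words:
  "(u, v) \<in> pres_rel S R \<Longrightarrow> set u \<subseteq> S \<times> UNIV \<and> set v \<subseteq> S \<times> UNIV"
  by (induction rule: pres_rel.induct) (auto simp: inv_letter_def mem_Times_iff)

lemma pres_rel_cong:
  assumes "(u, v) \<in> pres_rel S R" "set x \<subseteq> S \<times> UNIV" "set y \<subseteq> S \<times> UNIV"
  shows "(x @ u @ y, x @ v @ y) \<in> pres_rel S R"
  using assms
proof (induction rule: pres_rel.induct)
  case (refl w)
  then show ?case by (intro pres_rel.refl) auto
next
  case (sym u v)
  then show ?case by (blast intro: pres_rel.sym)
next
  case (trans u v w)
  then show ?case by (blast intro: pres_rel.trans)
next
  case (relator u v r)
  have "((x @ u) @ (v @ y), (x @ u) @ r @ (v @ y)) \<in> pres_rel S R"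
    using relator by (intro pres_rel.relator) auto
  then show ?case by simp
next
  case (cancel u v l)
  have "((x @ u) @ (v @ y), (x @ u) @ [l, inv_letter l] @ (v @ y)) \<in> pres_rel S R"
    using cancel by (intro pres_rel.cancel) auto
  then show ?case by simp
qed

lemma word_class_eq_iff:
  assumes "set u \<subseteq> S \<times> UNIV"
  shows "word_class S R u = word_class S R v \<longleftrightarrow> (u, v) \<in> pres_rel S R"
proof
  assume "word_class S R u = word_class S R v"
  moreover have "u \<in> word_class S R u"
    using assms by (simp add: word_class_def pres_rel.refl)
  ultimately show "(u, v) \<in> pres_rel S R"
    by (simp add: word_class_def pres_rel.sym)
next
  assume "(u, v) \<in> pres_rel S R"
  then show "word_class S R u = word_class S R v"
    unfolding word_class_def by (auto intro: pres_rel.trans pres_rel.sym)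
qed

lemma word_class_mult:
  assumes u: "set u \<subseteq> S \<times> UNIV" and v: "set v \<subseteq> S \<times> UNIV"
  shows "word_class S R u \<otimes>\<^bsub>presented_group S R\<^esub> word_class S R v = word_class S R (u @ v)"
proof -
  have "(\<exists>x. (u, x) \<in> pres_rel S R \<and> (\<exists>y. (v, y) \<in> pres_rel S R \<and> (x @ y, z) \<in> pres_rel S R))
        \<longleftrightarrow> (u @ v, z) \<in> pres_rel S R" for z
  proof
    assume "\<exists>x. (u, x) \<in> pres_rel S R \<and> (\<exists>y. (v, y) \<in> pres_rel S R \<and> (x @ y, z) \<in> pres_rel S R)"
    then obtain x y where xy: "(u, x) \<in> pres_rel S R" "(v, y) \<in> pres_rel S R"
      "(x @ y, z) \<in> pres_rel S R" by blast
    have "(u @ v, x @ v) \<in> pres_rel S R"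
      using pres_rel_cong[OF xy(1), of "[]" v] v by simp
    moreover have "(x @ v, x @ y) \<in> pres_rel S R"
      using pres_rel_cong[OF xy(2), of x "[]"] pres_rel_words[OF xy(1)] by simp
    ultimately show "(u @ v, z) \<in> pres_rel S R"
      using xy(3) by (blast intro: pres_rel.trans)
  next
    assume "(u @ v, z) \<in> pres_rel S R"
    then show "\<exists>x. (u, x) \<in> pres_rel S R \<and> (\<exists>y. (v, y) \<in> pres_rel S R \<and> (x @ y, z) \<in> pres_rel S R)"
      using u v by (blast intro: pres_rel.refl)
  qed
  then show ?thesis
    unfolding presented_group_def word_class_def by (simp add: Bex_def Image_singleton)
qed

lemma word_inv_words: "set w \<subseteq> S \<times> UNIV \<Longrightarrow> set (word_inv w) \<subseteq> S \<times> UNIV"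
  by (auto simp: word_inv_def inv_letter_def mem_Times_iff)

lemma word_inv_inv [simp]: "word_inv (word_inv w) = w"
  by (simp add: word_inv_def rev_map inv_letter_def comp_def)

lemma word_inv_cancel:
  "set w \<subseteq> S \<times> UNIV \<Longrightarrow> (w @ word_inv w, []) \<in> pres_rel S R"
proof (induction w)
  case Nil
  then show ?case by (auto simp: word_inv_def intro: pres_rel.refl)
next
  case (Cons l w)
  have l: "fst l \<in> S" and w: "set w \<subseteq> S \<times> UNIV"
    using Cons.prems by (cases l; auto)+
  have "([l] @ (w @ word_inv w) @ [inv_letter l], [l] @ [] @ [inv_letter l]) \<in> pres_rel S R"
    using Cons.IH[OF w] l by (intro pres_rel_cong) (auto simp: mem_Times_iff inv_letter_def)
  moreover have "([] @ [], [] @ [l, inv_letter l] @ []) \<in> pres_rel S R"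
    using l by (intro pres_rel.cancel) auto
  ultimately show ?case
    by (auto simp: word_inv_def intro: pres_rel.trans pres_rel.sym)
qed

lemma presented_group_carrier:
  "carrier (presented_group S R) = {word_class S R w | w. set w \<subseteq> S \<times> UNIV}"
  by (simp add: presented_group_def word_class_def)

lemma presented_group_one: "\<one>\<^bsub>presented_group S R\<^esub> = word_class S R []"
  by (simp add: presented_group_def word_class_def)

lemma word_class_carrier:
  "set u \<subseteq> S \<times> UNIV \<Longrightarrow> word_class S R u \<in> carrier (presented_group S R)"
  by (auto simp: presented_group_carrier)

lemma presented_group_is_group: "group (presented_group S R)"
proof (rule groupI)
  fix x y assume "x \<in> carrier (presented_group S R)" "y \<in> carrier (presented_group S R)"
  then show "x \<otimes>\<^bsub>presented_group S R\<^esub> y \<in> carrier (presented_group S R)"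
    by (force simp: presented_group_carrier word_class_mult)
next
  show "\<one>\<^bsub>presented_group S R\<^esub> \<in> carrier (presented_group S R)"
    by (auto simp: presented_group_one presented_group_carrier)
next
  fix x y z assume "x \<in> carrier (presented_group S R)" "y \<in> carrier (presented_group S R)"
    "z \<in> carrier (presented_group S R)"
  then show "x \<otimes>\<^bsub>presented_group S R\<^esub> y \<otimes>\<^bsub>presented_group S R\<^esub> z =
             x \<otimes>\<^bsub>presented_group S R\<^esub> (y \<otimes>\<^bsub>presented_group S R\<^esub> z)"
    by (auto simp: presented_group_carrier word_class_mult)
next
  fix x assume "x \<in> carrier (presented_group S R)"
  then show "\<one>\<^bsub>presented_group S R\<^esub> \<otimes>\<^bsub>presented_group S R\<^esub> x = x"
    by (auto simp: presented_group_carrier word_class_mult presented_group_one)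
next
  fix x assume "x \<in> carrier (presented_group S R)"
  then obtain u where u: "x = word_class S R u" "set u \<subseteq> S \<times> UNIV"
    by (auto simp: presented_group_carrier)
  have "word_class S R (word_inv u) \<otimes>\<^bsub>presented_group S R\<^esub> x = \<one>\<^bsub>presented_group S R\<^esub>"
    using u word_inv_words[OF u(2)] word_inv_cancel[of "word_inv u" S R]
    by (simp add: word_class_mult presented_group_one word_class_eq_iff)
  then show "\<exists>y\<in>carrier (presented_group S R). y \<otimes>\<^bsub>presented_group S R\<^esub> x = \<one>\<^bsub>presented_group S R\<^esub>"
    using word_class_carrier[OF word_inv_words[OF u(2)]] by blast
qed

lemma word_class_inv:
  assumes "set u \<subseteq> S \<times> UNIV"
  shows "inv\<^bsub>presented_group S R\<^esub> (word_class S R u) = word_class S R (word_inv u)"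
proof -
  interpret group "presented_group S R" by (rule presented_group_is_group)
  show ?thesis
    using assms word_inv_words[OF assms] word_inv_cancel[of "word_inv u" S R]
    by (intro inv_equality)
      (auto simp: word_class_mult presented_group_one word_class_eq_iff word_class_carrier)
qed

lemma presented_group_generated:
  "carrier (presented_group S R) =
     generate (presented_group S R) ((\<lambda>x. word_class S R [(x, False)]) ` S)"
proof -
  interpret group "presented_group S R" by (rule presented_group_is_group)
  let ?gens = "(\<lambda>x. word_class S R [(x, False)]) ` S"
  have "word_class S R w \<in> generate (presented_group S R) ?gens" if "set w \<subseteq> S \<times> UNIV" for w
    using that
  proof (induction w)
    case Nil
    then show ?case by (simp add: presented_group_one[symmetric] generate.one)
  next
    case (Cons l w)
    obtain x b where l: "l = (x, b)" and x: "x \<in> S"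
      using Cons.prems by (cases l) auto
    have "word_class S R [l] \<in> generate (presented_group S R) ?gens"
    proof (cases b)
      case True
      then have "word_class S R [l] = inv\<^bsub>presented_group S R\<^esub> (word_class S R [(x, False)])"
        using x l by (subst word_class_inv) (auto simp: word_inv_def inv_letter_def)
      then show ?thesis using x by (auto intro: generate.inv)
    next
      case False
      then show ?thesis using x l by (auto intro: generate.incl)
    qed
    moreover have "word_class S R (l # w) = word_class S R [l] \<otimes>\<^bsub>presented_group S R\<^esub> word_class S R w"
      using Cons.prems by (subst word_class_mult) auto
    ultimately show ?case using Cons by (auto intro: generate.eng)
  qed
  moreover have "generate (presented_group S R) ?gens \<subseteq> carrier (presented_group S R)"
    by (rule generate_incl) (auto intro!: word_class_carrier)
  ultimately show ?thesis
    by (auto simp: presented_group_carrier)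
qed

definition eval_word :: "('k, 'm) monoid_scheme \<Rightarrow> ('a \<Rightarrow> 'k) \<Rightarrow> 'a word \<Rightarrow> 'k" where
  "eval_word K f w =
     foldr (\<lambda>l acc. (if snd l then inv\<^bsub>K\<^esub> (f (fst l)) else f (fst l)) \<otimes>\<^bsub>K\<^esub> acc) w \<one>\<^bsub>K\<^esub>"

lemma eval_word_Nil [simp]: "eval_word K f [] = \<one>\<^bsub>K\<^esub>"
  by (simp add: eval_word_def)

lemma eval_word_Cons [simp]:
  "eval_word K f (l # w) = (if snd l then inv\<^bsub>K\<^esub> (f (fst l)) else f (fst l)) \<otimes>\<^bsub>K\<^esub> eval_word K f w"
  by (simp add: eval_word_def)

context group
begin

lemma eval_word_closed:
  "f ` S \<subseteq> carrier G \<Longrightarrow> set w \<subseteq> S \<times> UNIV \<Longrightarrow> eval_word G f w \<in> carrier G"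
  by (induction w) auto

lemma eval_word_append:
  "f ` S \<subseteq> carrier G \<Longrightarrow> set u \<subseteq> S \<times> UNIV \<Longrightarrow> set v \<subseteq> S \<times> UNIV \<Longrightarrow>
   eval_word G f (u @ v) = eval_word G f u \<otimes> eval_word G f v"
  by (induction u) (auto simp: m_assoc eval_word_closed image_subset_iff)

lemma eval_word_respects:
  assumes "(u, v) \<in> pres_rel S R" and f: "f ` S \<subseteq> carrier G"
    and rel: "\<And>r. r \<in> R \<Longrightarrow> set r \<subseteq> S \<times> UNIV \<Longrightarrow> eval_word G f r = \<one>"
  shows "eval_word G f u = eval_word G f v"
  using assms(1)
proof (induction rule: pres_rel.induct)
  case (relator u v r)
  then show ?case using f rel by (simp add: eval_word_append eval_word_closed)
next
  case (cancel u v l)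
  have ls: "set [l, inv_letter l] \<subseteq> S \<times> UNIV"
    using cancel by (cases l) (auto simp: inv_letter_def)
  have "eval_word G f [l, inv_letter l] = \<one>"
    using cancel f by (auto simp: inv_letter_def)
  moreover have "eval_word G f (u @ [l, inv_letter l] @ v) =
      eval_word G f u \<otimes> (eval_word G f [l, inv_letter l] \<otimes> eval_word G f v)"
    using cancel ls by (simp only: eval_word_append[OF f] set_append Un_subset_iff)
  ultimately show ?case
    using cancel eval_word_closed[OF f, of v] by (simp add: eval_word_append[OF f] del: eval_word_Cons)
qed auto

lemma presented_hom:
  assumes f: "f ` S \<subseteq> carrier G"
    and rel: "\<And>r. r \<in> R \<Longrightarrow> set r \<subseteq> S \<times> UNIV \<Longrightarrow> eval_word G f r = \<one>"
  shows "(\<lambda>U. the_elem (eval_word G f ` U)) \<in> hom (presented_group S R) G"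
    and "set w \<subseteq> S \<times> UNIV \<Longrightarrow> the_elem (eval_word G f ` word_class S R w) = eval_word G f w"
proof -
  have on_class: "the_elem (eval_word G f ` word_class S R w) = eval_word G f w"
    if "set w \<subseteq> S \<times> UNIV" for w
  proof -
    have "eval_word G f ` word_class S R w = {eval_word G f w}"
      using that eval_word_respects[OF _ f rel]
      by (auto simp: word_class_def intro: pres_rel.refl)
    then show ?thesis by simp
  qed
  then show "set w \<subseteq> S \<times> UNIV \<Longrightarrow> the_elem (eval_word G f ` word_class S R w) = eval_word G f w" .
  show "(\<lambda>U. the_elem (eval_word G f ` U)) \<in> hom (presented_group S R) G"
    by (rule homI)
      (auto simp: presented_group_carrier on_class word_class_mult eval_word_append[OF f]
            intro: eval_word_closed[OF f])
qed

end

context group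
begin

lemma inv_cancel_left [simp]: "x \<in> carrier G \<Longrightarrow> y \<in> carrier G \<Longrightarrow> inv x \<otimes> (x \<otimes> y) = y"
  by (simp add: m_assoc[symmetric])

lemma cancel_inv_left [simp]: "x \<in> carrier G \<Longrightarrow> y \<in> carrier G \<Longrightarrow> x \<otimes> (inv x \<otimes> y) = y"
  by (simp add: m_assoc[symmetric])

lemma hom_eq_on_generate:
  assumes h1: "h1 \<in> hom G K" and h2: "h2 \<in> hom G K" and K: "group K" and S: "S \<subseteq> carrier G"
    and eq: "\<And>x. x \<in> S \<Longrightarrow> h1 x = h2 x" and x: "x \<in> generate G S"
  shows "h1 x = h2 x"
proof -
  interpret h1: group_hom G K h1 by (simp add: group_hom_def group_hom_axioms_def is_group K h1)
  interpret h2: group_hom G K h2 by (simp add: group_hom_def group_hom_axioms_def is_group K h2)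
  from x show ?thesis
  proof (induction rule: generate.induct)
    case (inv h)
    then show ?case using eq S by (auto simp: h1.hom_inv h2.hom_inv)
  next
    case (eng a b)
    then show ?case using generate_in_carrier[OF S] by simp
  qed (use eq in auto)
qed

lemma subgroup_of_generators_all:
  assumes "subgroup T G" "S \<subseteq> T" "carrier G = generate G S" "x \<in> carrier G"
  shows "x \<in> T"
  using generate_subgroup_incl[OF assms(2,1)] assms(3,4) by auto

lemma commutes_inv_left:
  assumes "x \<in> carrier G" "y \<in> carrier G" "x \<otimes> y = y \<otimes> x"
  shows "inv x \<otimes> y = y \<otimes> inv x"
proof -
  have "inv x \<otimes> y = inv x \<otimes> (y \<otimes> x) \<otimes> inv x" using assms(1,2) by (simp add: m_assoc)
  also have "\<dots> = inv x \<otimes> (x \<otimes> y) \<otimes> inv x" by (simp only: assms(3))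
  also have "\<dots> = y \<otimes> inv x" using assms(1,2) by simp
  finally show ?thesis .
qed

lemma commutes_mult_left:
  assumes "a \<in> carrier G" "b \<in> carrier G" "c \<in> carrier G" "a \<otimes> c = c \<otimes> a" "b \<otimes> c = c \<otimes> b"
  shows "a \<otimes> b \<otimes> c = c \<otimes> (a \<otimes> b)"
  using assms by (metis m_assoc)

lemma commutes_left_commute:
  assumes "x \<in> carrier G" "y \<in> carrier G" "w \<in> carrier G" "x \<otimes> y = y \<otimes> x"
  shows "x \<otimes> (y \<otimes> w) = y \<otimes> (x \<otimes> w)"
  using assms by (simp add: m_assoc[symmetric])

lemma commutes_int_pow:
  assumes x: "x \<in> carrier G" and y: "y \<in> carrier G" and xy: "x \<otimes> y = y \<otimes> x"
  shows "x [^] (k::int) \<otimes> y = y \<otimes> x [^] k"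
proof (cases "k < 0")
  case False
  then have "x [^] k = x [^] (nat k)"
    using int_pow_int[where x=x and n="nat k" and G=G] by simp
  then show ?thesis using group_commutes_pow[OF xy x y, of "nat k"] by simp
next
  case True
  then have "x [^] k = inv (x [^] (nat (-k)))"
    using int_pow_neg_int[of x "nat (-k)"] x by simp
  then show ?thesis
    using commutes_inv_left[OF _ y group_commutes_pow[OF xy x y]] x by simp
qed

definition twisted_commute :: "'a \<Rightarrow> 'a \<Rightarrow> 'a \<Rightarrow> bool" where
  "twisted_commute z a b \<longleftrightarrow> a \<otimes> b = z \<otimes> b \<otimes> a"

lemma twisted_commute_sym:
  assumes "z \<in> carrier G" "a \<in> carrier G" "b \<in> carrier G" "twisted_commute z a b"
  shows "twisted_commute (inv z) b a"
proof -
  have "inv z \<otimes> a \<otimes> b = inv z \<otimes> (z \<otimes> b \<otimes> a)"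
    using assms by (simp add: m_assoc twisted_commute_def)
  also have "\<dots> = b \<otimes> a" using assms(1-3) by (simp add: m_assoc[symmetric])
  finally show ?thesis unfolding twisted_commute_def by simp
qed

lemma twisted_commute_mult_left:
  assumes c: "z1 \<in> carrier G" "z2 \<in> carrier G" "x1 \<in> carrier G" "x2 \<in> carrier G" "y \<in> carrier G"
    and z2x1: "z2 \<otimes> x1 = x1 \<otimes> z2"
    and t1: "twisted_commute z1 x1 y" and t2: "twisted_commute z2 x2 y"
  shows "twisted_commute (z2 \<otimes> z1) (x1 \<otimes> x2) y"
proof -
  have "x1 \<otimes> x2 \<otimes> y = (x1 \<otimes> z2) \<otimes> y \<otimes> x2"
    using c t2 by (simp add: m_assoc twisted_commute_def)
  also have "\<dots> = z2 \<otimes> (x1 \<otimes> y) \<otimes> x2"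
    using c by (simp add: z2x1[symmetric] m_assoc)
  also have "\<dots> = z2 \<otimes> z1 \<otimes> y \<otimes> (x1 \<otimes> x2)"
    using c t1 by (simp add: m_assoc twisted_commute_def)
  finally show ?thesis by (simp add: twisted_commute_def)
qed

lemma twisted_commute_inv_left:
  assumes c: "z \<in> carrier G" "x \<in> carrier G" "y \<in> carrier G"
    and zx: "z \<otimes> x = x \<otimes> z" and t: "twisted_commute z x y"
  shows "twisted_commute (inv z) (inv x) y"
proof -
  have "y \<otimes> inv x = inv x \<otimes> (x \<otimes> y) \<otimes> inv x"
    using c by (simp add: m_assoc)
  also have "\<dots> = inv x \<otimes> (z \<otimes> y \<otimes> x) \<otimes> inv x"
    using t by (simp add: twisted_commute_def)
  also have "\<dots> = (inv x \<otimes> z) \<otimes> y"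
    using c by (simp add: m_assoc)
  also have "\<dots> = z \<otimes> (inv x \<otimes> y)"
    using c commutes_inv_left[OF c(2,1) zx[symmetric]] by (simp add: m_assoc[symmetric])
  finally have "y \<otimes> inv x = z \<otimes> (inv x \<otimes> y)" .
  then have "inv z \<otimes> y \<otimes> inv x = inv x \<otimes> y" using c by (simp add: m_assoc)
  then show ?thesis by (simp add: twisted_commute_def)
qed

lemma braid_rel_collapse:
  assumes p: "p \<in> carrier G" and q: "q \<in> carrier G" and braid: "p \<otimes> q \<otimes> p = q \<otimes> p \<otimes> q"
    and zp: "(q \<otimes> p \<otimes> inv q \<otimes> inv p) \<otimes> p = p \<otimes> (q \<otimes> p \<otimes> inv q \<otimes> inv p)"
  shows "p = q"
proof -
  define z where "z = q \<otimes> p \<otimes> inv q \<otimes> inv p"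
  have z: "z \<in> carrier G" using p q by (simp add: z_def)
  have qp: "q \<otimes> p = z \<otimes> (p \<otimes> q)" using p q by (simp add: z_def m_assoc)
  have "inv p \<otimes> q \<otimes> (p \<otimes> q) = inv p \<otimes> (p \<otimes> q \<otimes> p)"
    using p q by (simp add: m_assoc braid)
  also have "\<dots> = z \<otimes> (p \<otimes> q)" using p q by (simp add: m_assoc qp[symmetric])
  finally have "inv p \<otimes> q = z" using p q z by (simp add: r_cancel)
  then have q_eq: "q = p \<otimes> z" using p q z by (metis inv_solve_left)
  have zp': "z \<otimes> p = p \<otimes> z" using zp by (simp add: z_def)
  have zpw: "z \<otimes> (p \<otimes> w) = p \<otimes> (z \<otimes> w)" if "w \<in> carrier G" for w
    using p z that by (simp add: zp' m_assoc[symmetric])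
  have "(p \<otimes> p \<otimes> p \<otimes> z) \<otimes> \<one> = p \<otimes> q \<otimes> p"
    using p z by (simp add: q_eq m_assoc zp' zpw)
  also have "\<dots> = q \<otimes> p \<otimes> q" by (rule braid)
  also have "\<dots> = (p \<otimes> p \<otimes> p \<otimes> z) \<otimes> z"
    using p z by (simp add: q_eq m_assoc zp' zpw)
  finally have "z = \<one>" using p z by (simp del: r_one)
  then show ?thesis using q_eq p by simp
qed

lemma commutator_one_imp_commute:
  assumes "a \<in> carrier G" "b \<in> carrier G" "a \<otimes> b \<otimes> inv a \<otimes> inv b = \<one>"
  shows "a \<otimes> b = b \<otimes> a"
proof -
  have "a \<otimes> b = (a \<otimes> b \<otimes> inv a \<otimes> inv b) \<otimes> (b \<otimes> a)"
    using assms(1,2) by (simp add: m_assoc)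
  then show ?thesis using assms by simp
qed

end

lemma (in comm_group) finprod_int_pow_hom:
  assumes c: "c \<in> I \<rightarrow> carrier G" and D: "\<And>i. i \<in> I \<Longrightarrow> D i \<in> hom K integer_group"
  shows "(\<lambda>y. finprod G (\<lambda>i. c i [^] D i y) I) \<in> hom K G"
proof (rule homI)
  fix u v assume uv: "u \<in> carrier K" "v \<in> carrier K"
  have "c i [^] D i (u \<otimes>\<^bsub>K\<^esub> v) = c i [^] D i u \<otimes> c i [^] D i v" if "i \<in> I" for i
    using hom_mult[OF D[OF that] uv] int_pow_mult[OF funcset_mem[OF c that]] by simp
  then have "finprod G (\<lambda>i. c i [^] D i (u \<otimes>\<^bsub>K\<^esub> v)) I =
             finprod G (\<lambda>i. c i [^] D i u \<otimes> c i [^] D i v) I"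
    using c by (intro finprod_cong') auto
  then show "finprod G (\<lambda>i. c i [^] D i (u \<otimes>\<^bsub>K\<^esub> v)) I =
             finprod G (\<lambda>i. c i [^] D i u) I \<otimes> finprod G (\<lambda>i. c i [^] D i v) I"
    using c by (simp add: finprod_multf Pi_def)
qed (use c in \<open>auto intro: finprod_closed\<close>)

lemma (in comm_group) finprod_indicator_pow:
  assumes J: "finite J" and c: "c \<in> J \<rightarrow> carrier G"
  shows "finprod G (\<lambda>j. c j [^] (if x = j then 1 else 0 :: int)) J = (if x \<in> J then c x else \<one>)"
proof (cases "x \<in> J")
  case True
  have "finprod G (\<lambda>j. c j [^] (if x = j then 1 else 0 :: int)) J =
        finprod G (\<lambda>j. if x = j then c j else \<one>) J"
    by (intro finprod_cong') (auto simp: funcset_mem[OF c])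
  then show ?thesis using finprod_singleton[OF True J c] True by simp
next
  case False
  then show ?thesis by (auto intro: finprod_one_eqI)
qed

lemma (in group_hom) iso_image_quotient_kernel:
  assumes surj: "h ` carrier G = carrier H"
  shows "\<exists>\<iota>. \<iota> \<in> iso H (G Mod kernel G H h) \<and> (\<forall>x \<in> carrier G. \<iota> (h x) = kernel G H h #> x)"
proof -
  let ?N = "kernel G H h" and ?F = "\<lambda>U. the_elem (h ` U)"
  have F: "?F \<in> iso (G Mod ?N) H" by (rule FactGroup_iso_set[OF surj])
  interpret N: normal ?N G by (rule normal_kernel)
  interpret Q: group "G Mod ?N" by (rule N.factorgroup_is_group)
  have inj: "inj_on ?F (carrier (G Mod ?N))" using F by (simp add: iso_def bij_betw_def)
  have "inv_into (carrier (G Mod ?N)) ?F (h x) = ?N #> x" if x: "x \<in> carrier G" for x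
  proof -
    have "h ` (?N #> x) = {h x}"
    proof
      show "h ` (?N #> x) \<subseteq> {h x}"
      proof
        fix y assume "y \<in> h ` (?N #> x)"
        then obtain k where k: "k \<in> ?N" "y = h (k \<otimes> x)" unfolding r_coset_def by blast
        then have "k \<in> carrier G" "h k = \<one>\<^bsub>H\<^esub>" unfolding kernel_def by simp_all
        then show "y \<in> {h x}" using x k(2) by simp
      qed
      show "{h x} \<subseteq> h ` (?N #> x)" using G.rcos_self[OF x subgroup_kernel] by blast
    qed
    then have "?F (?N #> x) = h x" by simp
    moreover have "?N #> x \<in> carrier (G Mod ?N)"
      unfolding carrier_FactGroup using x by (rule imageI)
    ultimately show ?thesis using inv_into_f_f[OF inj] by metis
  qed
  then show ?thesis using Q.iso_set_sym[OF F] by blast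
qed

lemma iso_integer_group_commute:
  assumes H: "group H" and L: "subgroup L H"
    and \<phi>: "\<phi> \<in> iso (H\<lparr>carrier := L\<rparr>) integer_group" and p: "p \<in> L" and q: "q \<in> L"
  shows "p \<otimes>\<^bsub>H\<^esub> q = q \<otimes>\<^bsub>H\<^esub> p"
proof -
  have pq: "p \<otimes>\<^bsub>H\<^esub> q \<in> L" "q \<otimes>\<^bsub>H\<^esub> p \<in> L" using L p q by (auto intro: subgroup.m_closed)
  have "\<phi> (p \<otimes>\<^bsub>H\<^esub> q) = \<phi> (q \<otimes>\<^bsub>H\<^esub> p)"
    using \<phi> p q unfolding iso_def hom_def by auto
  then show ?thesis
    using \<phi> pq unfolding iso_def bij_betw_def by (auto dest: inj_onD)
qed

lemma cyclic_iso_integer_group_infinite_order: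
  assumes H: "group H" and s: "s \<in> carrier H"
    and \<phi>: "\<phi> \<in> iso (H\<lparr>carrier := {s [^]\<^bsub>H\<^esub> (k::int) | k. k \<in> UNIV}\<rparr>) integer_group"
    and m: "s [^]\<^bsub>H\<^esub> (m::int) = \<one>\<^bsub>H\<^esub>"
  shows "m = 0"
proof (rule ccontr)
  assume "m \<noteq> 0"
  interpret H: group H by (rule H)
  define M where "M = \<bar>m\<bar>"
  have M: "M > 0" using \<open>m \<noteq> 0\<close> by (simp add: M_def)
  have sM: "s [^]\<^bsub>H\<^esub> M = \<one>\<^bsub>H\<^esub>"
    using m s by (cases "m \<ge> 0") (auto simp: M_def H.int_pow_neg)
  have "s [^]\<^bsub>H\<^esub> k = s [^]\<^bsub>H\<^esub> (k mod M)" for k :: int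
  proof -
    have "s [^]\<^bsub>H\<^esub> k = s [^]\<^bsub>H\<^esub> (M * (k div M)) \<otimes>\<^bsub>H\<^esub> s [^]\<^bsub>H\<^esub> (k mod M)"
      using H.int_pow_mult[OF s, of "M * (k div M)" "k mod M"] by simp
    then show ?thesis using H.int_pow_pow[OF s, of M "k div M"] sM s by simp
  qed
  then have "{s [^]\<^bsub>H\<^esub> (k::int) | k. k \<in> UNIV} \<subseteq> (\<lambda>j. s [^]\<^bsub>H\<^esub> j) ` {0..<M}"
    using M by (auto intro!: image_eqI[where x = "_ mod M"])
  then have "finite {s [^]\<^bsub>H\<^esub> (k::int) | k. k \<in> UNIV}" by (rule finite_subset) simp
  moreover have "bij_betw \<phi> {s [^]\<^bsub>H\<^esub> (k::int) | k. k \<in> UNIV} (UNIV :: int set)"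
    using \<phi> unfolding iso_def by auto
  ultimately show False using bij_betw_finite by fastforce
qed

section \<open>The surface braid group\<close>

abbreviation "BG n g \<equiv> braid_group n g"
abbreviation "sgm n g i \<equiv> bgen_elem n g (Sig i)"
abbreviation "aa n g i \<equiv> bgen_elem n g (Ag i)"
abbreviation "bb n g i \<equiv> bgen_elem n g (Bg i)"

lemma braid_gens_simps [simp]:
  "Sig i \<in> braid_gens n g \<longleftrightarrow> 1 \<le> i \<and> i \<le> n - 1"
  "Ag i \<in> braid_gens n g \<longleftrightarrow> 1 \<le> i \<and> i \<le> g"
  "Bg i \<in> braid_gens n g \<longleftrightarrow> 1 \<le> i \<and> i \<le> g"
  by (auto simp: braid_gens_def)

lemma braid_group_is_group: "group (BG n g)"
  unfolding braid_group_def by (rule presented_group_is_group)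

lemma bgen_elem_carrier: "x \<in> braid_gens n g \<Longrightarrow> bgen_elem n g x \<in> carrier (BG n g)"
  unfolding braid_group_def bgen_elem_def gen_word_def by (rule word_class_carrier) auto

lemma bgen_elems_carrier: "bgen_elem n g ` braid_gens n g \<subseteq> carrier (BG n g)"
  using bgen_elem_carrier by auto

lemma braid_group_generated: "carrier (BG n g) = generate (BG n g) (bgen_elem n g ` braid_gens n g)"
  unfolding braid_group_def bgen_elem_def gen_word_def by (rule presented_group_generated)

lemma braid_class_gen_Cons:
  "x \<in> braid_gens n g \<Longrightarrow> set w \<subseteq> braid_gens n g \<times> UNIV \<Longrightarrow>
   word_class (braid_gens n g) (braid_relators n g) (gen_word x @ w) =
   bgen_elem n g x \<otimes>\<^bsub>BG n g\<^esub> word_class (braid_gens n g) (braid_relators n g) w"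
  unfolding braid_group_def bgen_elem_def by (subst word_class_mult) (auto simp: gen_word_def)

lemma braid_class_inv_gen_Cons:
  assumes x: "x \<in> braid_gens n g" and w: "set w \<subseteq> braid_gens n g \<times> UNIV"
  shows "word_class (braid_gens n g) (braid_relators n g) (word_inv (gen_word x) @ w) =
    inv\<^bsub>BG n g\<^esub> (bgen_elem n g x) \<otimes>\<^bsub>BG n g\<^esub> word_class (braid_gens n g) (braid_relators n g) w"
proof -
  have "word_class (braid_gens n g) (braid_relators n g) (word_inv (gen_word x)) =
        inv\<^bsub>BG n g\<^esub> (bgen_elem n g x)"
    unfolding braid_group_def bgen_elem_def using x by (subst word_class_inv) (auto simp: gen_word_def)
  then show ?thesis using x w
    by (subst word_class_mult[symmetric]) (auto simp: braid_group_def word_inv_def gen_word_def inv_letter_def)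
qed

lemma set_gen_word [simp]: "set (gen_word x) = {(x, False)}"
  by (simp add: gen_word_def)

lemma set_word_inv_gen_word [simp]: "set (word_inv (gen_word x)) = {(x, True)}"
  by (simp add: gen_word_def word_inv_def inv_letter_def)

lemmas braid_class_simps = braid_class_gen_Cons braid_class_inv_gen_Cons bgen_elem_def[symmetric]

lemma braid_relation_holds:
  assumes "rel_word u v \<in> braid_relators n g"
    and u: "set u \<subseteq> braid_gens n g \<times> UNIV" and v: "set v \<subseteq> braid_gens n g \<times> UNIV"
  shows "word_class (braid_gens n g) (braid_relators n g) u =
         word_class (braid_gens n g) (braid_relators n g) v"
proof -
  let ?S = "braid_gens n g" and ?R = "braid_relators n g"
  interpret group "presented_group ?S ?R" by (rule presented_group_is_group)
  have r: "set (rel_word u v) \<subseteq> ?S \<times> UNIV"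
    using u word_inv_words[OF v] by (auto simp: rel_word_def)
  have "([] @ [], [] @ rel_word u v @ []) \<in> pres_rel ?S ?R"
    using assms r by (intro pres_rel.relator) auto
  then have "word_class ?S ?R (rel_word u v) = \<one>\<^bsub>presented_group ?S ?R\<^esub>"
    by (simp add: presented_group_one word_class_eq_iff[symmetric])
  then have "word_class ?S ?R u \<otimes>\<^bsub>presented_group ?S ?R\<^esub> inv\<^bsub>presented_group ?S ?R\<^esub> (word_class ?S ?R v)
      = \<one>\<^bsub>presented_group ?S ?R\<^esub>"
    using u v word_inv_words[OF v] by (simp add: rel_word_def word_class_mult word_class_inv)
  then show ?thesis using u v
    by (metis inv_solve_right one_closed word_class_carrier l_one)
qed

context
  fixes n g :: nat
begin

interpretation B: group "BG n g" by (rule braid_group_is_group)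

lemma braid_sigma_rel:
  assumes "1 \<le> i" "i \<le> n - 2"
  shows "sgm n g i \<otimes>\<^bsub>BG n g\<^esub> sgm n g (i+1) \<otimes>\<^bsub>BG n g\<^esub> sgm n g i =
         sgm n g (i+1) \<otimes>\<^bsub>BG n g\<^esub> sgm n g i \<otimes>\<^bsub>BG n g\<^esub> sgm n g (i+1)"
proof -
  have "rel_word (gen_word (Sig i) @ gen_word (Sig (i+1)) @ gen_word (Sig i))
               (gen_word (Sig (i+1)) @ gen_word (Sig i) @ gen_word (Sig (i+1))) \<in> braid_relators n g"
    using assms unfolding braid_relators_def by blast
  note rel = braid_relation_holds[OF this]
  have "i \<le> n - Suc 0" "Suc i \<le> n - Suc 0" using assms by arith+
  then show ?thesis using rel assms
    by (simp add: braid_class_simps B.m_assoc bgen_elem_carrier)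
qed

lemma braid_genus_commutes_sigma:
  assumes "c \<in> {Ag i, Bg i}" "1 \<le> i" "i \<le> g" "2 \<le> j" "j \<le> n - 1"
  shows "bgen_elem n g c \<otimes>\<^bsub>BG n g\<^esub> sgm n g j = sgm n g j \<otimes>\<^bsub>BG n g\<^esub> bgen_elem n g c"
proof -
  have "rel_word (gen_word c @ gen_word (Sig j)) (gen_word (Sig j) @ gen_word c) \<in> braid_relators n g"
    using assms unfolding braid_relators_def by blast
  from braid_relation_holds[OF this] assms show ?thesis
    by (auto simp: braid_class_simps B.m_assoc bgen_elem_carrier)
qed

lemma braid_a_b_rel:
  assumes "1 \<le> i" "i \<le> g" "3 \<le> n"
  shows "aa n g i \<otimes>\<^bsub>BG n g\<^esub> sgm n g 1 \<otimes>\<^bsub>BG n g\<^esub> bb n g i =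
         sgm n g 1 \<otimes>\<^bsub>BG n g\<^esub> bb n g i \<otimes>\<^bsub>BG n g\<^esub> sgm n g 1 \<otimes>\<^bsub>BG n g\<^esub> aa n g i \<otimes>\<^bsub>BG n g\<^esub> sgm n g 1"
proof -
  have "rel_word (gen_word (Ag i) @ gen_word (Sig 1) @ gen_word (Bg i))
          (gen_word (Sig 1) @ gen_word (Bg i) @ gen_word (Sig 1) @ gen_word (Ag i) @ gen_word (Sig 1))
        \<in> braid_relators n g"
    using assms unfolding braid_relators_def by blast
  from braid_relation_holds[OF this] assms show ?thesis
    by (simp add: braid_class_simps B.m_assoc bgen_elem_carrier)
qed

lemma braid_distinct_genus_rel:
  assumes "1 \<le> j" "j < i" "i \<le> g" "ci \<in> {Ag i, Bg i}" "cj \<in> {Ag j, Bg j}" "3 \<le> n"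
  shows "bgen_elem n g ci \<otimes>\<^bsub>BG n g\<^esub> inv\<^bsub>BG n g\<^esub> sgm n g 1 \<otimes>\<^bsub>BG n g\<^esub> bgen_elem n g cj \<otimes>\<^bsub>BG n g\<^esub> sgm n g 1 =
         inv\<^bsub>BG n g\<^esub> sgm n g 1 \<otimes>\<^bsub>BG n g\<^esub> bgen_elem n g cj \<otimes>\<^bsub>BG n g\<^esub> sgm n g 1 \<otimes>\<^bsub>BG n g\<^esub> bgen_elem n g ci"
proof -
  have "rel_word (gen_word ci @ word_inv (gen_word (Sig 1)) @ gen_word cj @ gen_word (Sig 1))
          (word_inv (gen_word (Sig 1)) @ gen_word cj @ gen_word (Sig 1) @ gen_word ci)
        \<in> braid_relators n g"
    using assms unfolding braid_relators_def by blast
  from braid_relation_holds[OF this] assms show ?thesis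
    by (auto simp: braid_class_simps B.m_assoc bgen_elem_carrier)
qed

end

section \<open>Exponent-sum homomorphisms\<close>

lemma eval_word_integer_group:
  "eval_word integer_group \<phi> w = sum_list (map (\<lambda>l. if snd l then - \<phi> (fst l) else \<phi> (fst l)) w)"
  by (induction w) auto

lemma eval_word_integer_group_word_inv:
  "eval_word integer_group \<phi> (word_inv w) = - eval_word integer_group \<phi> w"
  by (induction w) (auto simp: eval_word_integer_group word_inv_def inv_letter_def)

lemma eval_word_integer_group_append:
  "eval_word integer_group \<phi> (u @ w) = eval_word integer_group \<phi> u + eval_word integer_group \<phi> w"
  by (simp add: eval_word_integer_group)

lemma exponent_sum_relators:
  assumes "\<And>i. \<phi> (Sig i) = 0" "r \<in> braid_relators n g"
  shows "eval_word integer_group \<phi> r = 0"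
  using assms(2) unfolding braid_relators_def
  by (auto simp: rel_word_def eval_word_integer_group_append eval_word_integer_group_word_inv
      gen_word_def assms(1))

definition exponent_sum :: "nat \<Rightarrow> nat \<Rightarrow> (bgen \<Rightarrow> int) \<Rightarrow> bgen word set \<Rightarrow> int" where
  "exponent_sum n g \<phi> = (\<lambda>U. the_elem (eval_word integer_group \<phi> ` U))"

lemma exponent_sum_hom:
  assumes "\<And>i. \<phi> (Sig i) = 0"
  shows "exponent_sum n g \<phi> \<in> hom (BG n g) integer_group"
  unfolding exponent_sum_def braid_group_def
  by (rule group.presented_hom(1)[OF group_integer_group]) (auto intro: exponent_sum_relators assms)

lemma exponent_sum_gen:
  assumes "\<And>i. \<phi> (Sig i) = 0" "x \<in> braid_gens n g"
  shows "exponent_sum n g \<phi> (bgen_elem n g x) = \<phi> x"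
proof -
  have "the_elem (eval_word integer_group \<phi> ` word_class (braid_gens n g) (braid_relators n g) (gen_word x)) =
        eval_word integer_group \<phi> (gen_word x)"
    by (rule group.presented_hom(2)[OF group_integer_group])
      (use assms in \<open>auto intro: exponent_sum_relators\<close>)
  then show ?thesis by (simp add: exponent_sum_def bgen_elem_def gen_word_def)
qed

text \<open>The signed number of occurrences of a generator \<open>c\<close> different from all \<open>\<sigma>\<^sub>i\<close>; for
  \<open>c = a\<^sub>i\<close> and \<open>c = b\<^sub>i\<close> these are the homomorphisms \<open>\<alpha>\<^sub>i\<close> and \<open>\<beta>\<^sub>i\<close>.\<close>

definition gen_count :: "nat \<Rightarrow> nat \<Rightarrow> bgen \<Rightarrow> bgen word set \<Rightarrow> int" where
  "gen_count n g c = exponent_sum n g (\<lambda>x. if x = c then 1 else 0)"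

lemma gen_count_hom: "(\<And>i. c \<noteq> Sig i) \<Longrightarrow> gen_count n g c \<in> hom (BG n g) integer_group"
  unfolding gen_count_def by (rule exponent_sum_hom) auto

lemma gen_count_gen:
  "(\<And>i. c \<noteq> Sig i) \<Longrightarrow> x \<in> braid_gens n g \<Longrightarrow>
   gen_count n g c (bgen_elem n g x) = (if x = c then 1 else 0)"
  unfolding gen_count_def by (rule exponent_sum_gen) auto

definition genus_gens :: "nat \<Rightarrow> bgen set" where
  "genus_gens g = {Ag i | i. 1 \<le> i \<and> i \<le> g} \<union> {Bg i | i. 1 \<le> i \<and> i \<le> g}"

lemma genus_gens_finite: "finite (genus_gens g)"
proof -
  have "genus_gens g = Ag ` {1..g} \<union> Bg ` {1..g}" by (auto simp: genus_gens_def)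
  then show ?thesis by simp
qed

lemma genus_gens_not_Sig: "c \<in> genus_gens g \<Longrightarrow> c \<noteq> Sig i"
  by (auto simp: genus_gens_def)

lemma genus_gens_braid_gens: "c \<in> genus_gens g \<Longrightarrow> c \<in> braid_gens n g"
  by (auto simp: genus_gens_def)

lemma hom_integer_group_scale:
  assumes "D \<in> hom G integer_group"
  shows "(\<lambda>y. c * D y) \<in> hom G integer_group"
  using assms by (auto simp: hom_def distrib_left)

section \<open>The lower central series up to \<open>\<Gamma>\<^sub>3\<close>\<close>

lemma lower_central_2: "lower_central G 2 = comm_subgroup G (carrier G) (carrier G)"
  by (simp add: numeral_2_eq_2)

lemma lower_central_3: "lower_central G 3 = comm_subgroup G (carrier G) (lower_central G 2)"
  by (simp add: numeral_3_eq_3 numeral_2_eq_2)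

context group
begin

lemma lower_central_2_derived: "lower_central G 2 = derived G (carrier G)"
  unfolding lower_central_2 comm_subgroup_def derived_def
  by (rule arg_cong[where f="generate G"]) blast

lemma lower_central_2_normal: "lower_central G 2 \<lhd> G"
  using lower_central_2_derived derived_self_is_normal by simp

lemma lower_central_2_subset: "lower_central G 2 \<subseteq> carrier G"
  using lower_central_2_normal normal_imp_subgroup subgroup.subset by blast

text \<open>Conjugates of commutators are commutators of conjugates; hence \<open>\<Gamma>\<^sub>3\<close> is normal.\<close>

lemma commutator_conj:
  assumes "x \<in> carrier G" "y \<in> carrier G" "h \<in> carrier G"
  shows "h \<otimes> (x \<otimes> y \<otimes> inv x \<otimes> inv y) \<otimes> inv h =
         (h \<otimes> x \<otimes> inv h) \<otimes> (h \<otimes> y \<otimes> inv h) \<otimes> inv (h \<otimes> x \<otimes> inv h) \<otimes> inv (h \<otimes> y \<otimes> inv h)"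
  using assms by (simp add: m_assoc inv_mult_group)

lemma lower_central_3_normal: "lower_central G 3 \<lhd> G"
  unfolding lower_central_3 comm_subgroup_def
proof (rule normal_generateI)
  show "{x \<otimes> y \<otimes> inv x \<otimes> inv y | x y. x \<in> carrier G \<and> y \<in> lower_central G 2} \<subseteq> carrier G"
    using lower_central_2_subset by auto
next
  interpret N: normal "lower_central G 2" G by (rule lower_central_2_normal)
  fix h k
  assume "h \<in> {x \<otimes> y \<otimes> inv x \<otimes> inv y | x y. x \<in> carrier G \<and> y \<in> lower_central G 2}"
    and k: "k \<in> carrier G"
  then obtain x y where xy: "x \<in> carrier G" "y \<in> lower_central G 2" "h = x \<otimes> y \<otimes> inv x \<otimes> inv y"
    by blast
  have "k \<otimes> h \<otimes> inv k =
     (k \<otimes> x \<otimes> inv k) \<otimes> (k \<otimes> y \<otimes> inv k) \<otimes> inv (k \<otimes> x \<otimes> inv k) \<otimes> inv (k \<otimes> y \<otimes> inv k)"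
    using commutator_conj[OF xy(1) _ k, of y] xy lower_central_2_subset by auto
  moreover have "k \<otimes> y \<otimes> inv k \<in> lower_central G 2" using N.inv_op_closed2[OF k xy(2)] .
  ultimately show "k \<otimes> h \<otimes> inv k \<in> {x \<otimes> y \<otimes> inv x \<otimes> inv y | x y. x \<in> carrier G \<and> y \<in> lower_central G 2}"
    using xy k by blast
qed

lemma lower_central_2_class_central:
  assumes w: "w \<in> carrier G" and c: "c \<in> lower_central G 2"
  shows "(lower_central G 3 #> w) \<otimes>\<^bsub>G Mod lower_central G 3\<^esub> (lower_central G 3 #> c) =
         (lower_central G 3 #> c) \<otimes>\<^bsub>G Mod lower_central G 3\<^esub> (lower_central G 3 #> w)"
proof -
  let ?G3 = "lower_central G 3" and ?Q = "G Mod lower_central G 3"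
  interpret N: normal ?G3 G by (rule lower_central_3_normal)
  interpret Q: group ?Q by (rule N.factorgroup_is_group)
  interpret proj: group_hom G ?Q "\<lambda>x. ?G3 #> x"
    by (simp add: group_hom_def group_hom_axioms_def is_group Q.is_group N.r_coset_hom_Mod)
  have cc: "c \<in> carrier G" using c lower_central_2_subset by auto
  have "w \<otimes> c \<otimes> inv w \<otimes> inv c \<in> ?G3"
    unfolding lower_central_3 comm_subgroup_def by (rule generate.incl) (use w c in blast)
  then have "?G3 #> (w \<otimes> c \<otimes> inv w \<otimes> inv c) = \<one>\<^bsub>?Q\<^esub>"
    using coset_join2[OF _ N.subgroup_axioms] by (simp add: one_FactGroup)
  then have "(?G3 #> w) \<otimes>\<^bsub>?Q\<^esub> (?G3 #> c) \<otimes>\<^bsub>?Q\<^esub> inv\<^bsub>?Q\<^esub> (?G3 #> w) \<otimes>\<^bsub>?Q\<^esub> inv\<^bsub>?Q\<^esub> (?G3 #> c)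
      = \<one>\<^bsub>?Q\<^esub>"
    using w cc by (simp add: proj.hom_inv del: mult_FactGroup one_FactGroup)
  then show ?thesis by (rule Q.commutator_one_imp_commute[rotated 2]) (use w cc in auto)
qed

end

section \<open>Collapsing the braid generators \<open>\<sigma>\<^sub>i\<close>\<close>

lemma sigma_images_collapse:
  assumes K: "group K" and h: "h \<in> hom (BG n g) K"
    and comm: "\<And>m. 1 \<le> m \<Longrightarrow> m \<le> n - 2 \<Longrightarrow>
      (h (sgm n g (m+1)) \<otimes>\<^bsub>K\<^esub> h (sgm n g m) \<otimes>\<^bsub>K\<^esub> inv\<^bsub>K\<^esub> h (sgm n g (m+1)) \<otimes>\<^bsub>K\<^esub> inv\<^bsub>K\<^esub> h (sgm n g m))
        \<otimes>\<^bsub>K\<^esub> h (sgm n g m) =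
      h (sgm n g m) \<otimes>\<^bsub>K\<^esub>
        (h (sgm n g (m+1)) \<otimes>\<^bsub>K\<^esub> h (sgm n g m) \<otimes>\<^bsub>K\<^esub> inv\<^bsub>K\<^esub> h (sgm n g (m+1)) \<otimes>\<^bsub>K\<^esub> inv\<^bsub>K\<^esub> h (sgm n g m))"
    and i: "1 \<le> i" "i \<le> n - 1"
  shows "h (sgm n g i) = h (sgm n g 1)"
  using i
proof (induction i rule: dec_induct)
  case (step m)
  interpret B: group "BG n g" by (rule braid_group_is_group)
  interpret h: group_hom "BG n g" K h
    by (simp add: group_hom_def group_hom_axioms_def B.is_group K h)
  have m: "1 \<le> m" "m \<le> n - 2" using step by auto
  have cm: "sgm n g m \<in> carrier (BG n g)" "sgm n g (m+1) \<in> carrier (BG n g)"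
    using m by (auto intro!: bgen_elem_carrier)
  have "h (sgm n g m) \<otimes>\<^bsub>K\<^esub> h (sgm n g (m+1)) \<otimes>\<^bsub>K\<^esub> h (sgm n g m) =
        h (sgm n g (m+1)) \<otimes>\<^bsub>K\<^esub> h (sgm n g m) \<otimes>\<^bsub>K\<^esub> h (sgm n g (m+1))"
    using arg_cong[OF braid_sigma_rel[where n=n and g=g, OF m], of h] cm by simp
  from h.H.braid_rel_collapse[OF _ _ this comm[OF m]]
  have "h (sgm n g m) = h (sgm n g (m+1))" using cm by simp
  then show ?case using step by simp
qed simp

text \<open>In \<open>B\<^sub>n(\<Sigma>\<^sub>g)/\<Gamma>\<^sub>3\<close> all \<open>\<sigma>\<^sub>i\<close> have the same class, since commutators are central there.\<close>

lemma sigma_classes_mod_lower_central_3: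
  assumes i: "1 \<le> i" "i \<le> n - 1"
  shows "lower_central (BG n g) 3 #>\<^bsub>BG n g\<^esub> sgm n g i =
         lower_central (BG n g) 3 #>\<^bsub>BG n g\<^esub> sgm n g 1"
proof -
  interpret B: group "BG n g" by (rule braid_group_is_group)
  let ?G3 = "lower_central (BG n g) 3" and ?Q = "BG n g Mod lower_central (BG n g) 3"
  interpret N: normal ?G3 "BG n g" by (rule B.lower_central_3_normal)
  interpret Q: group ?Q by (rule N.factorgroup_is_group)
  interpret proj: group_hom "BG n g" ?Q "\<lambda>x. ?G3 #>\<^bsub>BG n g\<^esub> x"
    by (simp add: group_hom_def group_hom_axioms_def B.is_group Q.is_group N.r_coset_hom_Mod)
  show ?thesis
  proof (rule sigma_images_collapse[OF Q.is_group N.r_coset_hom_Mod _ i])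
    fix m assume m: "1 \<le> m" "m \<le> n - 2"
    let ?a = "sgm n g m" and ?b = "sgm n g (m+1)"
    have cm: "?a \<in> carrier (BG n g)" "?b \<in> carrier (BG n g)" using m by (auto intro!: bgen_elem_carrier)
    let ?c = "?b \<otimes>\<^bsub>BG n g\<^esub> ?a \<otimes>\<^bsub>BG n g\<^esub> inv\<^bsub>BG n g\<^esub> ?b \<otimes>\<^bsub>BG n g\<^esub> inv\<^bsub>BG n g\<^esub> ?a"
    have c2: "?c \<in> lower_central (BG n g) 2"
      unfolding lower_central_2 comm_subgroup_def by (rule generate.incl) (use cm in blast)
    let ?p = "?G3 #>\<^bsub>BG n g\<^esub> ?a" and ?q = "?G3 #>\<^bsub>BG n g\<^esub> ?b"
    from B.lower_central_2_class_central[OF cm(1) c2] cm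
    show "(?q \<otimes>\<^bsub>?Q\<^esub> ?p \<otimes>\<^bsub>?Q\<^esub> inv\<^bsub>?Q\<^esub> ?q \<otimes>\<^bsub>?Q\<^esub> inv\<^bsub>?Q\<^esub> ?p) \<otimes>\<^bsub>?Q\<^esub> ?p =
        ?p \<otimes>\<^bsub>?Q\<^esub> (?q \<otimes>\<^bsub>?Q\<^esub> ?p \<otimes>\<^bsub>?Q\<^esub> inv\<^bsub>?Q\<^esub> ?q \<otimes>\<^bsub>?Q\<^esub> inv\<^bsub>?Q\<^esub> ?p)"
      by (simp add: proj.hom_inv del: mult_FactGroup)
  qed
qed

section \<open>Homomorphisms identifying all \<open>\<sigma>\<^sub>i\<close>\<close>

locale const_sigma_hom = K: group K for K (structure) +
  fixes n g :: nat and f :: "bgen word set \<Rightarrow> 'a" and s :: 'a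
  assumes n3: "3 \<le> n"
    and f_hom: "f \<in> hom (BG n g) K"
    and f_sigma: "\<And>i. 1 \<le> i \<Longrightarrow> i \<le> n - 1 \<Longrightarrow> f (sgm n g i) = s"
begin

sublocale B: group "BG n g" by (rule braid_group_is_group)

sublocale f: group_hom "BG n g" K f
  by (simp add: group_hom_def group_hom_axioms_def B.is_group K.is_group f_hom)

lemma f_gen_carrier: "x \<in> braid_gens n g \<Longrightarrow> f (bgen_elem n g x) \<in> carrier K"
  by (rule f.hom_closed[OF bgen_elem_carrier])

lemma f_sigma_1: "f (sgm n g 1) = s"
  using f_sigma n3 by auto

lemma s_carrier [simp]: "s \<in> carrier K"
  using f_gen_carrier[of "Sig 1"] n3 f_sigma_1 by auto

text \<open>\<open>s = f(\<sigma>\<^sub>2)\<close> commutes with the images of \<open>a\<^sub>i\<close> and \<open>b\<^sub>i\<close>; this is where \<open>n \<ge> 3\<close> is used.\<close>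

lemma s_commutes_genus:
  assumes "c \<in> {Ag i, Bg i}" "1 \<le> i" "i \<le> g"
  shows "f (bgen_elem n g c) \<otimes> s = s \<otimes> f (bgen_elem n g c)"
proof -
  have "f (bgen_elem n g c \<otimes>\<^bsub>BG n g\<^esub> sgm n g 2) = f (sgm n g 2 \<otimes>\<^bsub>BG n g\<^esub> bgen_elem n g c)"
    using braid_genus_commutes_sigma[OF assms, of 2] n3 by simp
  moreover have "f (sgm n g 2) = s" using f_sigma n3 by simp
  moreover have "bgen_elem n g c \<in> carrier (BG n g)" "sgm n g 2 \<in> carrier (BG n g)"
    using assms n3 by (auto intro!: bgen_elem_carrier)
  ultimately show ?thesis by simp
qed

lemma s_commutes_image:
  assumes y: "y \<in> carrier (BG n g)"
  shows "f y \<otimes> s = s \<otimes> f y"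
proof -
  let ?T = "{y \<in> carrier (BG n g). f y \<otimes> s = s \<otimes> f y}"
  have "subgroup ?T (BG n g)"
  proof (rule B.subgroupI)
    fix a assume "a \<in> ?T"
    then show "inv\<^bsub>BG n g\<^esub> a \<in> ?T"
      using K.commutes_inv_left[of "f a" s] by (simp add: f.hom_inv)
  next
    fix a b assume "a \<in> ?T" "b \<in> ?T"
    then show "a \<otimes>\<^bsub>BG n g\<^esub> b \<in> ?T"
      using K.commutes_mult_left[of "f a" "f b" s] by simp
  qed force+
  moreover have "bgen_elem n g ` braid_gens n g \<subseteq> ?T"
  proof
    fix z assume "z \<in> bgen_elem n g ` braid_gens n g"
    then obtain x where x: "x \<in> braid_gens n g" "z = bgen_elem n g x" by auto
    then have "f z \<otimes> s = s \<otimes> f z"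
      by (cases x) (auto simp: f_sigma s_commutes_genus)
    then show "z \<in> ?T" using x bgen_elem_carrier by auto
  qed
  ultimately show ?thesis
    using B.subgroup_of_generators_all[OF _ _ braid_group_generated y] by auto
qed

lemma s_pow_commutes_image:
  "y \<in> carrier (BG n g) \<Longrightarrow> s [^] (k::int) \<otimes> f y = f y \<otimes> s [^] k"
  using K.commutes_int_pow[OF s_carrier f.hom_closed] s_commutes_image by metis

text \<open>The relation \<open>a\<^sub>i \<sigma>\<^sub>1 b\<^sub>i = \<sigma>\<^sub>1 b\<^sub>i \<sigma>\<^sub>1 a\<^sub>i \<sigma>\<^sub>1\<close> becomes \<open>f(a\<^sub>i) f(b\<^sub>i) = s\<^sup>2 f(b\<^sub>i) f(a\<^sub>i)\<close>.\<close>

lemma a_b_twisted_commute: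
  assumes i: "1 \<le> i" "i \<le> g"
  shows "K.twisted_commute (s [^] (2::int)) (f (aa n g i)) (f (bb n g i))"
proof -
  let ?A = "f (aa n g i)" and ?B = "f (bb n g i)"
  have c: "?A \<in> carrier K" "?B \<in> carrier K" using f_gen_carrier i by auto
  have sA: "s \<otimes> ?A = ?A \<otimes> s" and sB: "s \<otimes> ?B = ?B \<otimes> s"
    using s_commutes_genus[of "Ag i" i] s_commutes_genus[of "Bg i" i] i by auto
  have sAw: "s \<otimes> (?A \<otimes> w) = ?A \<otimes> (s \<otimes> w)" and sBw: "s \<otimes> (?B \<otimes> w) = ?B \<otimes> (s \<otimes> w)"
    if "w \<in> carrier K" for w
    using K.commutes_left_commute[OF s_carrier _ that] sA sB c by auto
  have "?A \<otimes> s \<otimes> ?B = s \<otimes> ?B \<otimes> s \<otimes> ?A \<otimes> s"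
    using arg_cong[OF braid_a_b_rel[OF i n3], of f] i n3 f_sigma_1 by (simp add: bgen_elem_carrier)
  then have "(?A \<otimes> ?B) \<otimes> s = (s \<otimes> s \<otimes> ?B \<otimes> ?A) \<otimes> s"
    using c by (simp add: K.m_assoc sA sB sAw sBw)
  then have "?A \<otimes> ?B = s \<otimes> s \<otimes> ?B \<otimes> ?A"
    using c by (simp del: K.m_assoc)
  moreover have "s [^] (2::int) = s \<otimes> s"
    using int_pow_int[where x=s and n=2 and G=K] by (simp add: numeral_2_eq_2)
  ultimately show ?thesis by (simp add: K.twisted_commute_def)
qed

lemma distinct_genus_commute:
  assumes c1: "c1 \<in> {Ag i, Bg i}" "1 \<le> i" "i \<le> g" and c2: "c2 \<in> {Ag j, Bg j}" "1 \<le> j" "j \<le> g"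
    and "i \<noteq> j"
  shows "f (bgen_elem n g c1) \<otimes> f (bgen_elem n g c2) = f (bgen_elem n g c2) \<otimes> f (bgen_elem n g c1)"
proof -
  have ordered: "f (bgen_elem n g ci) \<otimes> f (bgen_elem n g cj) = f (bgen_elem n g cj) \<otimes> f (bgen_elem n g ci)"
    if h: "ci \<in> {Ag i', Bg i'}" "cj \<in> {Ag j', Bg j'}" "1 \<le> j'" "j' < i'" "i' \<le> g" for ci cj i' j'
  proof -
    let ?I = "f (bgen_elem n g ci)" and ?J = "f (bgen_elem n g cj)"
    have gi: "ci \<in> braid_gens n g" "cj \<in> braid_gens n g" using h by auto
    have c: "?I \<in> carrier K" "?J \<in> carrier K" using f_gen_carrier gi by auto
    have "?I \<otimes> inv s \<otimes> ?J \<otimes> s = inv s \<otimes> ?J \<otimes> s \<otimes> ?I"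
      using arg_cong[OF braid_distinct_genus_rel[OF h(3,4,5,1,2) n3], of f] gi n3 f_sigma_1
      by (simp add: bgen_elem_carrier f.hom_inv)
    moreover have "inv s \<otimes> ?J \<otimes> s = ?J"
      using s_commutes_genus[of cj j'] h c by (simp add: K.m_assoc)
    ultimately show ?thesis using c by (simp add: K.m_assoc)
  qed
  show ?thesis
    using ordered[of c1 i c2 j] ordered[of c2 j c1 i] assms by (cases "j < i") auto
qed

lemma twisted_commute_mult:
  assumes "a \<in> carrier (BG n g)" "b \<in> carrier (BG n g)" "c \<in> carrier K"
    "K.twisted_commute (s [^] (ka::int)) (f a) c" "K.twisted_commute (s [^] (kb::int)) (f b) c"
  shows "K.twisted_commute (s [^] (ka + kb)) (f (a \<otimes>\<^bsub>BG n g\<^esub> b)) c"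
proof -
  have "K.twisted_commute (s [^] kb \<otimes> s [^] ka) (f a \<otimes> f b) c"
    using assms s_pow_commutes_image by (intro K.twisted_commute_mult_left) auto
  then show ?thesis
    using assms K.int_pow_mult[OF s_carrier, of kb ka] by (simp add: add.commute)
qed

lemma twisted_commute_inv:
  assumes "a \<in> carrier (BG n g)" "c \<in> carrier K" "K.twisted_commute (s [^] (k::int)) (f a) c"
  shows "K.twisted_commute (s [^] (- k)) (f (inv\<^bsub>BG n g\<^esub> a)) c"
proof -
  have "K.twisted_commute (inv (s [^] k)) (inv (f a)) c"
    using assms s_pow_commutes_image by (intro K.twisted_commute_inv_left) auto
  then show ?thesis using assms by (simp add: K.int_pow_neg f.hom_inv)
qed

lemma twisted_commute_one: "c \<in> carrier K \<Longrightarrow> K.twisted_commute (s [^] (0::int)) (f \<one>\<^bsub>BG n g\<^esub>) c"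
  by (simp add: K.twisted_commute_def)

lemma twisted_commute_by_hom:
  assumes c: "c \<in> carrier K" and D: "D \<in> hom (BG n g) integer_group"
    and gens: "\<And>x. x \<in> braid_gens n g \<Longrightarrow>
      K.twisted_commute (s [^] D (bgen_elem n g x)) (f (bgen_elem n g x)) c"
    and y: "y \<in> carrier (BG n g)"
  shows "K.twisted_commute (s [^] D y) (f y) c"
proof -
  interpret D: group_hom "BG n g" integer_group D
    by (simp add: group_hom_def group_hom_axioms_def B.is_group D)
  let ?T = "{y \<in> carrier (BG n g). K.twisted_commute (s [^] D y) (f y) c}"
  have "subgroup ?T (BG n g)"
  proof (rule B.subgroupI)
    show "?T \<noteq> {}" using twisted_commute_one[OF c] D.hom_one B.one_closed by force
  next
    fix a assume "a \<in> ?T"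
    then show "inv\<^bsub>BG n g\<^esub> a \<in> ?T" using twisted_commute_inv[OF _ c] D.hom_inv by auto
  next
    fix a b assume "a \<in> ?T" "b \<in> ?T"
    then show "a \<otimes>\<^bsub>BG n g\<^esub> b \<in> ?T" using twisted_commute_mult[OF _ _ c] D.hom_mult by auto
  qed auto
  moreover have "bgen_elem n g ` braid_gens n g \<subseteq> ?T" using gens bgen_elem_carrier by auto
  ultimately show ?thesis using B.subgroup_of_generators_all[OF _ _ braid_group_generated y] by auto
qed

lemma commute_twisted_commute:
  "a \<in> carrier K \<Longrightarrow> b \<in> carrier K \<Longrightarrow> a \<otimes> b = b \<otimes> a \<Longrightarrow> K.twisted_commute (s [^] (0::int)) a b"
  by (simp add: K.twisted_commute_def)

lemma twisted_commute_b:
  assumes i: "1 \<le> i" "i \<le> g" and y: "y \<in> carrier (BG n g)"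
  shows "K.twisted_commute (s [^] (2 * gen_count n g (Ag i) y)) (f y) (f (bb n g i))"
proof (rule twisted_commute_by_hom[OF _ hom_integer_group_scale[OF gen_count_hom] _ y])
  have B: "f (bb n g i) \<in> carrier K" using f_gen_carrier i by auto
  then show "f (bb n g i) \<in> carrier K" .
  fix x assume x: "x \<in> braid_gens n g"
  have fx: "f (bgen_elem n g x) \<in> carrier K" using f_gen_carrier[OF x] .
  show "K.twisted_commute (s [^] (2 * gen_count n g (Ag i) (bgen_elem n g x)))
          (f (bgen_elem n g x)) (f (bb n g i))"
  proof (cases "x = Ag i")
    case True
    then show ?thesis using a_b_twisted_commute[OF i] x by (simp add: gen_count_gen)
  next
    case False
    have "f (bgen_elem n g x) \<otimes> f (bb n g i) = f (bb n g i) \<otimes> f (bgen_elem n g x)"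
    proof (cases x)
      case (Sig j)
      then show ?thesis using x f_sigma s_commutes_genus[of "Bg i" i] i by auto
    next
      case (Ag j)
      then show ?thesis using distinct_genus_commute[of x j "Bg i" i] x i False by auto
    next
      case (Bg j)
      then show ?thesis using distinct_genus_commute[of x j "Bg i" i] x i by (cases "j = i") auto
    qed
    then show ?thesis using commute_twisted_commute[OF fx B] x False by (simp add: gen_count_gen)
  qed
qed simp

lemma twisted_commute_a:
  assumes i: "1 \<le> i" "i \<le> g" and y: "y \<in> carrier (BG n g)"
  shows "K.twisted_commute (s [^] (-2 * gen_count n g (Bg i) y)) (f y) (f (aa n g i))"
proof (rule twisted_commute_by_hom[OF _ hom_integer_group_scale[OF gen_count_hom] _ y])
  have A: "f (aa n g i) \<in> carrier K" using f_gen_carrier i by auto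
  then show "f (aa n g i) \<in> carrier K" .
  fix x assume x: "x \<in> braid_gens n g"
  have fx: "f (bgen_elem n g x) \<in> carrier K" using f_gen_carrier[OF x] .
  show "K.twisted_commute (s [^] (-2 * gen_count n g (Bg i) (bgen_elem n g x)))
          (f (bgen_elem n g x)) (f (aa n g i))"
  proof (cases "x = Bg i")
    case True
    have "K.twisted_commute (inv (s [^] (2::int))) (f (bb n g i)) (f (aa n g i))"
      using K.twisted_commute_sym[OF _ A _ a_b_twisted_commute[OF i]] f_gen_carrier i by auto
    then show ?thesis using x True by (simp add: gen_count_gen K.int_pow_neg)
  next
    case False
    have "f (bgen_elem n g x) \<otimes> f (aa n g i) = f (aa n g i) \<otimes> f (bgen_elem n g x)"
    proof (cases x)
      case (Sig j)
      then show ?thesis using x f_sigma s_commutes_genus[of "Ag i" i] i by auto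
    next
      case (Bg j)
      then show ?thesis using distinct_genus_commute[of x j "Ag i" i] x i False by auto
    next
      case (Ag j)
      then show ?thesis using distinct_genus_commute[of x j "Ag i" i] x i by (cases "j = i") auto
    qed
    then show ?thesis using commute_twisted_commute[OF fx A] x False by (simp add: gen_count_gen)
  qed
qed simp

lemma image_twisted_commute:
  assumes x: "x \<in> carrier (BG n g)" and y: "y \<in> carrier (BG n g)"
  shows "\<exists>k::int. K.twisted_commute (s [^] k) (f x) (f y)"
proof -
  let ?T = "{x \<in> carrier (BG n g). \<exists>k::int. K.twisted_commute (s [^] k) (f x) (f y)}"
  have fy: "f y \<in> carrier K" using y by simp
  have "subgroup ?T (BG n g)"
  proof (rule B.subgroupI)
    show "?T \<noteq> {}" using twisted_commute_one[OF fy] B.one_closed by blast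
  next
    fix a assume "a \<in> ?T"
    then show "inv\<^bsub>BG n g\<^esub> a \<in> ?T" using twisted_commute_inv[OF _ fy] by blast
  next
    fix a b assume "a \<in> ?T" "b \<in> ?T"
    then show "a \<otimes>\<^bsub>BG n g\<^esub> b \<in> ?T" using twisted_commute_mult[OF _ _ fy] by blast
  qed auto
  moreover have "bgen_elem n g ` braid_gens n g \<subseteq> ?T"
  proof
    fix z assume "z \<in> bgen_elem n g ` braid_gens n g"
    then obtain x0 where x0: "x0 \<in> braid_gens n g" "z = bgen_elem n g x0" by auto
    have "\<exists>k::int. K.twisted_commute (s [^] k) (f z) (f y)"
    proof (cases x0)
      case (Sig j)
      then have "f z = s" using x0 f_sigma by auto
      then have "K.twisted_commute (s [^] (0::int)) (f z) (f y)"
        using commute_twisted_commute[OF s_carrier fy s_commutes_image[OF y, symmetric]] by simp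
      then show ?thesis by blast
    next
      case (Ag i)
      then have "K.twisted_commute (inv (s [^] (-2 * gen_count n g (Bg i) y))) (f (aa n g i)) (f y)"
        using K.twisted_commute_sym[OF _ fy _ twisted_commute_a[of i y]] x0 y f_gen_carrier by auto
      then show ?thesis using Ag x0 K.int_pow_neg[OF s_carrier] by metis
    next
      case (Bg i)
      then have "K.twisted_commute (inv (s [^] (2 * gen_count n g (Ag i) y))) (f (bb n g i)) (f y)"
        using K.twisted_commute_sym[OF _ fy _ twisted_commute_b[of i y]] x0 y f_gen_carrier by auto
      then show ?thesis using Bg x0 K.int_pow_neg[OF s_carrier] by metis
    qed
    then show "z \<in> ?T" using x0 bgen_elem_carrier by auto
  qed
  ultimately show ?thesis using B.subgroup_of_generators_all[OF _ _ braid_group_generated x] by auto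
qed

definition pow_preimage :: "bgen word set set" where
  "pow_preimage = {y \<in> carrier (BG n g). \<exists>k::int. f y = s [^] k}"

text \<open>It is a normal subgroup, since \<open>\<langle>s\<rangle>\<close> is central in the image of \<open>f\<close>.\<close>

lemma pow_preimage_subgroup: "subgroup pow_preimage (BG n g)"
proof (rule B.subgroupI)
  show "pow_preimage \<noteq> {}"
    unfolding pow_preimage_def by (auto intro!: exI[of _ "\<one>\<^bsub>BG n g\<^esub>"] exI[of _ 0])
next
  fix a assume "a \<in> pow_preimage"
  then obtain k where "a \<in> carrier (BG n g)" "f a = s [^] (k::int)" by (auto simp: pow_preimage_def)
  then show "inv\<^bsub>BG n g\<^esub> a \<in> pow_preimage"
    by (auto simp: pow_preimage_def f.hom_inv K.int_pow_neg intro!: exI[of _ "- k"])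
next
  fix a b assume "a \<in> pow_preimage" "b \<in> pow_preimage"
  then obtain k l where "a \<in> carrier (BG n g)" "f a = s [^] (k::int)"
      "b \<in> carrier (BG n g)" "f b = s [^] (l::int)"
    by (auto simp: pow_preimage_def)
  then show "a \<otimes>\<^bsub>BG n g\<^esub> b \<in> pow_preimage"
    by (auto simp: pow_preimage_def K.int_pow_mult intro!: exI[of _ "k + l"])
qed (auto simp: pow_preimage_def)

lemma pow_preimage_normal: "pow_preimage \<lhd> BG n g"
proof (rule B.normal_invI[OF pow_preimage_subgroup])
  fix x h assume x: "x \<in> carrier (BG n g)" and "h \<in> pow_preimage"
  then obtain k where h: "h \<in> carrier (BG n g)" "f h = s [^] (k::int)"
    by (auto simp: pow_preimage_def)
  have "f (x \<otimes>\<^bsub>BG n g\<^esub> h \<otimes>\<^bsub>BG n g\<^esub> inv\<^bsub>BG n g\<^esub> x) = s [^] k \<otimes> f x \<otimes> inv (f x)"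
    using x h by (simp add: f.hom_inv s_pow_commutes_image)
  also have "\<dots> = s [^] k" using x by (simp add: K.m_assoc)
  finally show "x \<otimes>\<^bsub>BG n g\<^esub> h \<otimes>\<^bsub>BG n g\<^esub> inv\<^bsub>BG n g\<^esub> x \<in> pow_preimage"
    using x h by (auto simp: pow_preimage_def)
qed

lemma commutator_in_pow_preimage:
  assumes x: "x \<in> carrier (BG n g)" and y: "y \<in> carrier (BG n g)"
  shows "x \<otimes>\<^bsub>BG n g\<^esub> y \<otimes>\<^bsub>BG n g\<^esub> inv\<^bsub>BG n g\<^esub> x \<otimes>\<^bsub>BG n g\<^esub> inv\<^bsub>BG n g\<^esub> y \<in> pow_preimage"
proof -
  obtain k where k: "K.twisted_commute (s [^] (k::int)) (f x) (f y)"
    using image_twisted_commute[OF x y] by blast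
  have "f (x \<otimes>\<^bsub>BG n g\<^esub> y \<otimes>\<^bsub>BG n g\<^esub> inv\<^bsub>BG n g\<^esub> x \<otimes>\<^bsub>BG n g\<^esub> inv\<^bsub>BG n g\<^esub> y) =
        (f x \<otimes> f y) \<otimes> inv (f y \<otimes> f x)"
    using x y by (simp add: f.hom_inv K.m_assoc K.inv_mult_group)
  also have "\<dots> = s [^] k"
    using k x y by (simp add: K.twisted_commute_def K.m_assoc)
  finally show ?thesis using x y by (auto simp: pow_preimage_def)
qed

lemma lower_central_2_subset_pow_preimage: "lower_central (BG n g) 2 \<subseteq> pow_preimage"
  unfolding lower_central_2 comm_subgroup_def
  by (rule B.generate_subgroup_incl[OF _ pow_preimage_subgroup]) (use commutator_in_pow_preimage in blast)

lemma pow_preimage_quotient_comm: "comm_group (BG n g Mod pow_preimage)"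
proof -
  interpret N: normal pow_preimage "BG n g" by (rule pow_preimage_normal)
  interpret Q: group "BG n g Mod pow_preimage" by (rule N.factorgroup_is_group)
  show ?thesis
  proof (rule Q.group_comm_groupI)
    fix U V assume "U \<in> carrier (BG n g Mod pow_preimage)" "V \<in> carrier (BG n g Mod pow_preimage)"
    then obtain x y where xy: "x \<in> carrier (BG n g)" "y \<in> carrier (BG n g)"
      "U = pow_preimage #>\<^bsub>BG n g\<^esub> x" "V = pow_preimage #>\<^bsub>BG n g\<^esub> y"
      by (auto simp: carrier_FactGroup)
    have "(x \<otimes>\<^bsub>BG n g\<^esub> y) \<otimes>\<^bsub>BG n g\<^esub> inv\<^bsub>BG n g\<^esub> (y \<otimes>\<^bsub>BG n g\<^esub> x) \<in> pow_preimage"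
      using commutator_in_pow_preimage[OF xy(1,2)] xy by (simp add: B.m_assoc B.inv_mult_group)
    then have "x \<otimes>\<^bsub>BG n g\<^esub> y \<in> pow_preimage #>\<^bsub>BG n g\<^esub> (y \<otimes>\<^bsub>BG n g\<^esub> x)"
      using N.rcos_module[OF B.is_group] xy by auto
    then have "pow_preimage #>\<^bsub>BG n g\<^esub> (y \<otimes>\<^bsub>BG n g\<^esub> x) = pow_preimage #>\<^bsub>BG n g\<^esub> (x \<otimes>\<^bsub>BG n g\<^esub> y)"
      using B.repr_independence[OF _ _ pow_preimage_subgroup] xy by auto
    then show "U \<otimes>\<^bsub>BG n g Mod pow_preimage\<^esub> V = V \<otimes>\<^bsub>BG n g Mod pow_preimage\<^esub> U"
      using xy by (simp add: N.rcos_sum)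
  qed
qed

definition genus_product :: "bgen word set \<Rightarrow> bgen word set set" where
  "genus_product u = finprod (BG n g Mod pow_preimage)
     (\<lambda>c. (pow_preimage #>\<^bsub>BG n g\<^esub> bgen_elem n g c) [^]\<^bsub>BG n g Mod pow_preimage\<^esub> gen_count n g c u)
     (genus_gens g)"

text \<open>\<open>genus_product\<close> is a homomorphism agreeing with the projection on generators, hence
  equal to it.\<close>

lemma genus_classes_carrier:
  "(\<lambda>c. pow_preimage #>\<^bsub>BG n g\<^esub> bgen_elem n g c) \<in> genus_gens g \<rightarrow> carrier (BG n g Mod pow_preimage)"
  using bgen_elem_carrier genus_gens_braid_gens by (auto simp: carrier_FactGroup)

lemma genus_product_hom: "genus_product \<in> hom (BG n g) (BG n g Mod pow_preimage)"
proof -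
  interpret Q: comm_group "BG n g Mod pow_preimage" by (rule pow_preimage_quotient_comm)
  show ?thesis
    unfolding genus_product_def using genus_gens_not_Sig
    by (intro Q.finprod_int_pow_hom[OF genus_classes_carrier] gen_count_hom) blast
qed

lemma genus_product_gen:
  assumes x: "x \<in> braid_gens n g"
  shows "genus_product (bgen_elem n g x) = pow_preimage #>\<^bsub>BG n g\<^esub> bgen_elem n g x"
proof -
  interpret N: normal pow_preimage "BG n g" by (rule pow_preimage_normal)
  interpret Q: comm_group "BG n g Mod pow_preimage" by (rule pow_preimage_quotient_comm)
  have counts: "gen_count n g c (bgen_elem n g x) = (if x = c then 1 else 0)" if "c \<in> genus_gens g" for c
    using gen_count_gen[OF genus_gens_not_Sig[OF that] x] by simp
  have "genus_product (bgen_elem n g x) =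
      finprod (BG n g Mod pow_preimage)
        (\<lambda>c. (pow_preimage #>\<^bsub>BG n g\<^esub> bgen_elem n g c) [^]\<^bsub>BG n g Mod pow_preimage\<^esub>
          (if x = c then 1 else 0 :: int)) (genus_gens g)"
    unfolding genus_product_def
    by (intro Q.finprod_cong' Pi_I Q.int_pow_closed funcset_mem[OF genus_classes_carrier])
      (simp_all add: counts)
  also have "\<dots> = (if x \<in> genus_gens g then pow_preimage #>\<^bsub>BG n g\<^esub> bgen_elem n g x
                                       else \<one>\<^bsub>BG n g Mod pow_preimage\<^esub>)"
    by (rule Q.finprod_indicator_pow[OF genus_gens_finite genus_classes_carrier])
  also have "\<dots> = pow_preimage #>\<^bsub>BG n g\<^esub> bgen_elem n g x"
  proof (cases "x \<in> genus_gens g")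
    case False
    then obtain j where j: "x = Sig j" using x by (cases x) (auto simp: genus_gens_def)
    have "f (bgen_elem n g x) = s [^] (1::int)" using x j f_sigma by simp
    then have "bgen_elem n g x \<in> pow_preimage"
      using bgen_elem_carrier[OF x] unfolding pow_preimage_def by blast
    then show ?thesis
      using False B.coset_join2[OF _ pow_preimage_subgroup] N.subset by (auto simp: one_FactGroup)
  qed simp
  finally show ?thesis .
qed

lemma coset_eq_genus_product:
  "y \<in> carrier (BG n g) \<Longrightarrow> pow_preimage #>\<^bsub>BG n g\<^esub> y = genus_product y"
  using B.hom_eq_on_generate[OF normal.r_coset_hom_Mod[OF pow_preimage_normal] genus_product_hom
      comm_group.axioms(2)[OF pow_preimage_quotient_comm] bgen_elems_carrier] genus_product_gen
    braid_group_generated by fastforce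

lemma zero_gen_counts_in_pow_preimage:
  assumes y: "y \<in> carrier (BG n g)"
    and zero: "\<And>c. c \<in> genus_gens g \<Longrightarrow> gen_count n g c y = 0"
  shows "y \<in> pow_preimage"
proof -
  interpret Q: comm_group "BG n g Mod pow_preimage" by (rule pow_preimage_quotient_comm)
  have "pow_preimage #>\<^bsub>BG n g\<^esub> y = \<one>\<^bsub>BG n g Mod pow_preimage\<^esub>"
    unfolding coset_eq_genus_product[OF y] genus_product_def
    by (rule Q.finprod_one_eqI) (simp add: zero del: one_FactGroup)
  then have "pow_preimage #>\<^bsub>BG n g\<^esub> y = pow_preimage" by (simp only: one_FactGroup)
  then show ?thesis using B.rcos_self[OF y pow_preimage_subgroup] by simp
qed

text \<open>Commutators with elements of the preimage of \<open>\<langle>s\<rangle>\<close> are killed by \<open>f\<close>, so \<open>\<Gamma>\<^sub>3 \<subseteq> ker f\<close>.\<close>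

lemma commutator_pow_preimage_kernel:
  assumes x: "x \<in> carrier (BG n g)" and y: "y \<in> pow_preimage"
  shows "f (x \<otimes>\<^bsub>BG n g\<^esub> y \<otimes>\<^bsub>BG n g\<^esub> inv\<^bsub>BG n g\<^esub> x \<otimes>\<^bsub>BG n g\<^esub> inv\<^bsub>BG n g\<^esub> y) = \<one>"
proof -
  obtain k where yc: "y \<in> carrier (BG n g)" and k: "f y = s [^] (k::int)"
    using y by (auto simp: pow_preimage_def)
  have "f (x \<otimes>\<^bsub>BG n g\<^esub> y \<otimes>\<^bsub>BG n g\<^esub> inv\<^bsub>BG n g\<^esub> x \<otimes>\<^bsub>BG n g\<^esub> inv\<^bsub>BG n g\<^esub> y) =
        s [^] k \<otimes> f x \<otimes> inv (f x) \<otimes> inv (s [^] k)"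
    using x yc k by (simp add: f.hom_inv s_pow_commutes_image[OF x, symmetric])
  also have "\<dots> = \<one>" using x by (simp add: K.m_assoc)
  finally show ?thesis .
qed

lemma lower_central_3_subset_kernel: "lower_central (BG n g) 3 \<subseteq> kernel (BG n g) K f"
  unfolding lower_central_3 comm_subgroup_def
proof (rule B.generate_subgroup_incl[OF _ f.subgroup_kernel], safe)
  fix x y assume "x \<in> carrier (BG n g)" "y \<in> lower_central (BG n g) 2"
  moreover from this have "y \<in> pow_preimage" using lower_central_2_subset_pow_preimage by auto
  ultimately show "x \<otimes>\<^bsub>BG n g\<^esub> y \<otimes>\<^bsub>BG n g\<^esub> inv\<^bsub>BG n g\<^esub> x \<otimes>\<^bsub>BG n g\<^esub> inv\<^bsub>BG n g\<^esub> y \<in> kernel (BG n g) K f"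
    using commutator_pow_preimage_kernel B.lower_central_2_subset by (auto simp: kernel_def)
qed


lemma kernel_gen_counts_zero:
  assumes inf: "\<And>k::int. s [^] k = \<one> \<Longrightarrow> k = 0"
    and x: "x \<in> kernel (BG n g) K f" and c: "c \<in> genus_gens g"
  shows "gen_count n g c x = 0"
proof -
  have xc: "x \<in> carrier (BG n g)" and fx: "f x = \<one>" using x by (auto simp: kernel_def)
  have twist_trivial: "z = \<one>" if "K.twisted_commute z \<one> b" "z \<in> carrier K" "b \<in> carrier K" for z b
    using that by (simp add: K.twisted_commute_def)
  obtain i where i: "1 \<le> i" "i \<le> g" and ci: "c = Ag i \<or> c = Bg i"
    using c by (auto simp: genus_gens_def)
  from ci show ?thesis
  proof
    assume "c = Ag i"
    have "s [^] (2 * gen_count n g (Ag i) x) = \<one>"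
      using twisted_commute_b[OF i xc] fx f_gen_carrier i by (intro twist_trivial) auto
    then show ?thesis using inf \<open>c = Ag i\<close> by fastforce
  next
    assume "c = Bg i"
    have "s [^] (-2 * gen_count n g (Bg i) x) = \<one>"
      using twisted_commute_a[OF i xc] fx f_gen_carrier i by (intro twist_trivial) auto
    then show ?thesis using inf \<open>c = Bg i\<close> by fastforce
  qed
qed

text \<open>If \<open>s\<close> has infinite order, then \<open>ker f = \<Gamma>\<^sub>3\<close>: modulo \<open>\<Gamma>\<^sub>3\<close> a kernel element is a power
  \<open>\<sigma>\<^sub>1\<^sup>k\<close> (apply the preceding results to the projection onto \<open>B\<^sub>n(\<Sigma>\<^sub>g)/\<Gamma>\<^sub>3\<close>), and applying \<open>f\<close>
  gives \<open>s\<^sup>k = 1\<close>.\<close>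

lemma kernel_eq_lower_central_3:
  assumes inf: "\<And>k::int. s [^] k = \<one> \<Longrightarrow> k = 0"
  shows "kernel (BG n g) K f = lower_central (BG n g) 3"
proof
  let ?G3 = "lower_central (BG n g) 3" and ?Q = "BG n g Mod lower_central (BG n g) 3"
  interpret N: normal ?G3 "BG n g" by (rule B.lower_central_3_normal)
  interpret Q: group ?Q by (rule N.factorgroup_is_group)
  interpret proj: const_sigma_hom ?Q n g "\<lambda>x. ?G3 #>\<^bsub>BG n g\<^esub> x" "?G3 #>\<^bsub>BG n g\<^esub> sgm n g 1"
  proof (intro const_sigma_hom.intro const_sigma_hom_axioms.intro Q.is_group n3 N.r_coset_hom_Mod)
    show "?G3 #>\<^bsub>BG n g\<^esub> sgm n g i = ?G3 #>\<^bsub>BG n g\<^esub> sgm n g 1" if "1 \<le> i" "i \<le> n - 1" for i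
      using sigma_classes_mod_lower_central_3[OF that] .
  qed
  show "kernel (BG n g) K f \<subseteq> ?G3"
  proof
    fix x assume x: "x \<in> kernel (BG n g) K f"
    then have xc: "x \<in> carrier (BG n g)" and fx: "f x = \<one>" by (auto simp: kernel_def)
    have "x \<in> proj.pow_preimage"
      using proj.zero_gen_counts_in_pow_preimage[OF xc kernel_gen_counts_zero[OF inf x]] .
    then obtain k where k: "?G3 #>\<^bsub>BG n g\<^esub> x = (?G3 #>\<^bsub>BG n g\<^esub> sgm n g 1) [^]\<^bsub>?Q\<^esub> (k::int)"
      unfolding proj.pow_preimage_def by blast
    have s1: "sgm n g 1 \<in> carrier (BG n g)" using n3 by (auto intro: bgen_elem_carrier)
    then have pk: "sgm n g 1 [^]\<^bsub>BG n g\<^esub> k \<in> carrier (BG n g)" by simp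
    have "?G3 #>\<^bsub>BG n g\<^esub> (sgm n g 1 [^]\<^bsub>BG n g\<^esub> k) = ?G3 #>\<^bsub>BG n g\<^esub> x"
      using k proj.f.hom_int_pow[OF s1] by simp
    then have "x \<in> ?G3 #>\<^bsub>BG n g\<^esub> (sgm n g 1 [^]\<^bsub>BG n g\<^esub> k)"
      using B.repr_independenceD[OF N.subgroup_axioms xc] by simp
    then have "x \<otimes>\<^bsub>BG n g\<^esub> inv\<^bsub>BG n g\<^esub> (sgm n g 1 [^]\<^bsub>BG n g\<^esub> k) \<in> kernel (BG n g) K f"
      using N.rcos_module_imp[OF B.is_group pk] lower_central_3_subset_kernel by blast
    moreover have "f (sgm n g 1 [^]\<^bsub>BG n g\<^esub> k) = s [^] k"
      using f.hom_int_pow[OF s1] f_sigma_1 by simp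
    ultimately have "s [^] k = \<one>"
      using xc pk fx by (simp add: kernel_def f.hom_inv)
    then have "k = 0" by (rule inf)
    then have "?G3 #>\<^bsub>BG n g\<^esub> x = \<one>\<^bsub>?Q\<^esub>" using k by (simp del: one_FactGroup)
    then have "?G3 #>\<^bsub>BG n g\<^esub> x = ?G3" by (simp only: one_FactGroup)
    then show "x \<in> ?G3" using B.rcos_self[OF xc N.subgroup_axioms] by simp
  qed
qed (rule lower_central_3_subset_kernel)

end

section \<open>Consequences of \<open>\<lambda>(\<iota>\<^sub>n(B\<^sub>n)) \<cong> \<int>\<close>\<close>

text \<open>If \<open>\<lambda>(\<iota>\<^sub>n(B\<^sub>n)) \<cong> \<int>\<close>, the images of \<open>\<sigma>\<^sub>m\<close> and \<open>\<sigma>\<^sub>m\<^sub>+\<^sub>1\<close> commute, so \<open>\<lambda>\<close> identifies all \<open>\<sigma>\<^sub>i\<close>.\<close>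

lemma sigma_images_equal_of_iso_integer_group:
  assumes H: "group H" and lam: "lam \<in> hom (BG n g) H"
    and \<phi>: "\<phi> \<in> iso (H\<lparr>carrier := lam ` iota_image n g\<rparr>) integer_group"
    and i: "1 \<le> i" "i \<le> n - 1"
  shows "lam (sgm n g i) = lam (sgm n g 1)"
proof -
  interpret lam: group_hom "BG n g" H lam
    by (simp add: group_hom_def group_hom_axioms_def braid_group_is_group H lam)
  have sgm: "sgm n g m \<in> iota_image n g" "sgm n g m \<in> carrier (BG n g)" if "1 \<le> m" "m \<le> n - 1" for m
    using that unfolding iota_image_def by (auto intro: generate.incl bgen_elem_carrier)
  have L: "subgroup (lam ` iota_image n g) H"
    unfolding iota_image_def
    by (intro lam.subgroup_img_is_subgroup lam.G.generate_is_subgroup) (auto intro: bgen_elem_carrier)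
  show ?thesis
  proof (rule sigma_images_collapse[OF H lam _ i])
    fix m assume "1 \<le> m" "m \<le> n - 2"
    then have m: "1 \<le> m" "m \<le> n - 1" "1 \<le> m + 1" "m + 1 \<le> n - 1" by auto
    let ?p = "lam (sgm n g m)" and ?q = "lam (sgm n g (m+1))"
    have "?q \<otimes>\<^bsub>H\<^esub> ?p = ?p \<otimes>\<^bsub>H\<^esub> ?q"
      using iso_integer_group_commute[OF H L \<phi>] sgm[OF m(1,2)] sgm[OF m(3,4)] by blast
    then show "(?q \<otimes>\<^bsub>H\<^esub> ?p \<otimes>\<^bsub>H\<^esub> inv\<^bsub>H\<^esub> ?q \<otimes>\<^bsub>H\<^esub> inv\<^bsub>H\<^esub> ?p) \<otimes>\<^bsub>H\<^esub> ?p =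
        ?p \<otimes>\<^bsub>H\<^esub> (?q \<otimes>\<^bsub>H\<^esub> ?p \<otimes>\<^bsub>H\<^esub> inv\<^bsub>H\<^esub> ?q \<otimes>\<^bsub>H\<^esub> inv\<^bsub>H\<^esub> ?p)"
      using sgm[OF m(1,2)] sgm[OF m(3,4)] by (simp add: lam.H.m_assoc)
  qed
qed

lemma iota_image_image:
  assumes n3: "3 \<le> n" and H: "group H" and lam: "lam \<in> hom (BG n g) H"
    and sig: "\<And>i. 1 \<le> i \<Longrightarrow> i \<le> n - 1 \<Longrightarrow> lam (sgm n g i) = s"
  shows "lam ` iota_image n g = {s [^]\<^bsub>H\<^esub> (k::int) | k. k \<in> UNIV}"
proof -
  interpret lam: group_hom "BG n g" H lam
    by (simp add: group_hom_def group_hom_axioms_def braid_group_is_group H lam)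
  let ?S = "{sgm n g i | i. 1 \<le> i \<and> i \<le> n - 1}"
  have S: "?S \<subseteq> carrier (BG n g)" using bgen_elem_carrier by auto
  have "lam ` ?S = {s}" using sig n3 by force
  moreover have "s \<in> carrier H" using sig[of 1] n3 lam.hom_closed[OF bgen_elem_carrier, of "Sig 1"] by auto
  ultimately show ?thesis
    unfolding iota_image_def lam.generate_img[OF S, symmetric] by (simp add: lam.H.generate_pow)
qed

theorem mainTheorem10:
  fixes H :: "('h, 'c) monoid_scheme" and lam :: "bgen word set \<Rightarrow> 'h"
    and n g :: nat
  assumes "g \<ge> 1" and "n \<ge> 3"
    and "group H"
    and "lam \<in> hom (braid_group n g) H"
    and "lam ` carrier (braid_group n g) = carrier H"
    and "H\<lparr>carrier := lam ` iota_image n g\<rparr> \<cong> integer_group"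
  shows "\<exists>\<iota>. \<iota> \<in> iso H (braid_group n g Mod lower_central (braid_group n g) 3) \<and>
           (\<forall>x \<in> braid_gens n g. \<iota> (lam (bgen_elem n g x)) =
               lower_central (braid_group n g) 3 #>\<^bsub>braid_group n g\<^esub> bgen_elem n g x)"
proof -
  obtain \<phi> where \<phi>: "\<phi> \<in> iso (H\<lparr>carrier := lam ` iota_image n g\<rparr>) integer_group"
    using assms(6) by (auto simp: is_iso_def)
  define s where "s = lam (sgm n g 1)"
  have sigma: "lam (sgm n g i) = s" if "1 \<le> i" "i \<le> n - 1" for i
    unfolding s_def by (rule sigma_images_equal_of_iso_integer_group[OF assms(3,4) \<phi> that])
  interpret lam: const_sigma_hom H n g lam s
    by (intro const_sigma_hom.intro const_sigma_hom_axioms.intro assms(2-4) sigma)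
  have "kernel (braid_group n g) H lam = lower_central (braid_group n g) 3"
  proof (rule lam.kernel_eq_lower_central_3)
    have "lam ` iota_image n g = {s [^]\<^bsub>H\<^esub> (k::int) | k. k \<in> UNIV}"
      by (rule iota_image_image[OF assms(2-4) sigma])
    with \<phi> show "k = 0" if "s [^]\<^bsub>H\<^esub> k = \<one>\<^bsub>H\<^esub>" for k :: int
      using cyclic_iso_integer_group_infinite_order[OF assms(3) lam.s_carrier _ that] by simp
  qed
  then show ?thesis
    using lam.f.iso_image_quotient_kernel[OF assms(5)] bgen_elem_carrier by metis
qed

end
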